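(* For every non-decreasing function $f:(0,1)\to(0,1)$ there is a non-decreasing function $f':(0,1)\to(0,1)$ with $f'(x)<f(x)$ for all $x\in(0,1)$ such that the following holds. Let $\rho,\nu,\tau,\alpha\in(0,1)$ and $n,k,\ell\in\mathbb N$ satisfy $1/n\leq\rho\leq f'(\nu)$, $\nu\leq\tau\leq f'(\alpha)$. Then there exist $\zeta,\delta,\gamma,\beta,\eta$ with $\rho\leq f(\eta)$, $\eta\leq f(\beta)$, $\beta\leq f(\gamma)$, $\gamma\leq f(\zeta)$, $\zeta\leq f(\nu)$ and $\tau<\delta<\alpha$, such that for every $n$-vertex $D$-regular graph $G$ with $D\geq\alpha n$, every robust partition $\mathcal V$ of $G$ with parameters $\rho,\nu,\tau,k,\ell$ is a clustering of $G$ with parameters $\zeta,\delta,\gamma,\beta,\eta$ (with $c_{\min}=\alpha$, where for each bipartite part $W_j$ its bipartition $A_j,B_j$ serves as the partition witnessing that $W_j$ is $\beta$-almost-bipartite, and each part $V_i$ is $\gamma$-far-from-bipartite).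
   Context: For a graph $G$ and $S,T\subseteq V(G)$: $\overline{S}=V(G)\setminus S$; $d_S(v)=|N(v)\cap S|$; $E_G(S,T)=\{xy\in E(G):x\in S,y\in T\}$, $e_G(S,T)=|E_G(S,T)|$. For an $N$-vertex graph $H$, $\mathrm{RN}_{\nu,H}(S)=\{v:d_S(v)\ge\nu N\}$; $H$ is a robust $(\nu,\tau)$-expander if $|\mathrm{RN}_{\nu,H}(S)|\ge|S|+\nu N$ for all $S$ with $\tau N\le|S|\le(1-\tau)N$; $H$ is a bipartite robust $(\nu,\tau)$-expander with bipartition $A,B$ if this inequality holds for all $S\subseteq A$ with $\tau|A|\le|S|\le(1-\tau)|A|$. $\mathcal V=\{V_1,\dots,V_k,W_1,\dots,W_\ell\}$ is a robust partition of an $n$-vertex $D$-regular $G$ with parameters $\rho,\nu,\tau,k,\ell$ ($0<\rho\le\nu\le\tau<1$) if: (D1) it partitions $V(G)$; (D2) each $V_i$ satisfies $|V_i|\ge\sqrt\rho n$, $e_G(V_i,\overline{V_i})\le\rho n^2$ and $G[V_i]$ is a robust $(\nu,\tau)$-expander; (D3) each $W_j$ has a partition $A_j,B_j$ with $|A_j|,|B_j|\ge\sqrt\rho n$, $||A_j|-|B_j||\le\rho n$, $e_G(A_j,\overline{B_j})+e_G(B_j,\overline{A_j})\le\rho n^2$ and $G[W_j]$ a bipartite robust $(\nu,\tau)$-expander with bipartition $A_j,B_j$; (D4) $d_X(x)\ge d_{X'}(x)$ for all $X,X'\in\mathcal V$, $x\in X$; (D5) $d_{B_j}(u)\ge d_{A_j}(u)$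 for $u\in A_j$, $d_{A_j}(v)\ge d_{B_j}(v)$ for $v\in B_j$; (D6) $k+2\ell\le\lfloor(1+\rho^{1/3})n/D\rfloor$; (D7) each $X\in\mathcal V$ has all but at most $\rho n$ vertices with $d_X(x)\ge D-\rho n$. Clustering: a cut of $A\subseteq V(G)$ is a partition $X,Y$ of $A$ into non-empty sets; it is $\zeta$-sparse if $e_G(X,Y)\le\zeta|X||Y|$. $A$ is $\beta$-almost-bipartite if there is a partition $X,Y$ of $A$ such that $G[A]$ has at most $\beta n^2$ edges not in $E_G(X,Y)$; otherwise $A$ is $\beta$-far-from-bipartite. For $c_{\min}\in(0,1)$ and $G$ an $n$-vertex $D$-regular graph with $D\ge c_{\min}n$, a clustering of $G$ with parameters $\zeta,\delta,\gamma,\beta,\eta$ is a partition $\{A_1,\dots,A_r\}$ of $V(G)$ into non-empty sets such that: (a) at most $\eta n^2$ edges of $G$ have ends in different $A_i$; (b) $\delta(G[A_i])\ge\delta n$ for each $i$; (c) no $A_i$ has a $\zeta$-sparse cut; (d) each $A_i$ is either $\beta$-almost-bipartite (with a specified witnessing partition) or $\gamma$-far-from-bipartite. *)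

theory Defs
  imports Complex_Main
begin

definition graph :: "'a set \<Rightarrow> ('a \<Rightarrow> 'a \<Rightarrow> bool) \<Rightarrow> bool" where
  "graph V E \<longleftrightarrow> finite V \<and> (\<forall>x y. E x y \<longrightarrow> x \<in> V \<and> y \<in> V \<and> x \<noteq> y \<and> E y x)"

definition deg :: "('a \<Rightarrow> 'a \<Rightarrow> bool) \<Rightarrow> 'a set \<Rightarrow> 'a \<Rightarrow> nat" where
  "deg E S v = card {u \<in> S. E v u}"

definition regular :: "'a set \<Rightarrow> ('a \<Rightarrow> 'a \<Rightarrow> bool) \<Rightarrow> nat \<Rightarrow> bool" where
  "regular V E D \<longleftrightarrow> (\<forall>v\<in>V. deg E V v = D)"

definition edges_between :: "('a \<Rightarrow> 'a \<Rightarrow> bool) \<Rightarrow> 'a set \<Rightarrow> 'a set \<Rightarrow> 'a set set" where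
  "edges_between E S T = {{x, y} | x y. E x y \<and> x \<in> S \<and> y \<in> T}"

definition e :: "('a \<Rightarrow> 'a \<Rightarrow> bool) \<Rightarrow> 'a set \<Rightarrow> 'a set \<Rightarrow> nat" where
  "e E S T = card (edges_between E S T)"

definition RN :: "('a \<Rightarrow> 'a \<Rightarrow> bool) \<Rightarrow> 'a set \<Rightarrow> real \<Rightarrow> 'a set \<Rightarrow> 'a set" where
  "RN E U \<nu> S = {v \<in> U. real (deg E S v) \<ge> \<nu> * real (card U)}"

definition robust_expander :: "('a \<Rightarrow> 'a \<Rightarrow> bool) \<Rightarrow> 'a set \<Rightarrow> real \<Rightarrow> real \<Rightarrow> bool" where
  "robust_expander E U \<nu> \<tau> \<longleftrightarrow>
    (\<forall>S. S \<subseteq> U \<and> \<tau> * real (card U) \<le> real (card S) \<and> real (card S) \<le> (1 - \<tau>) * real (card U) \<longrightarrow>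
       real (card (RN E U \<nu> S)) \<ge> real (card S) + \<nu> * real (card U))"

definition bip_robust_expander :: "('a \<Rightarrow> 'a \<Rightarrow> bool) \<Rightarrow> 'a set \<Rightarrow> 'a set \<Rightarrow> real \<Rightarrow> real \<Rightarrow> bool" where
  "bip_robust_expander E A B \<nu> \<tau> \<longleftrightarrow>
    (\<forall>S. S \<subseteq> A \<and> \<tau> * real (card A) \<le> real (card S) \<and> real (card S) \<le> (1 - \<tau>) * real (card A) \<longrightarrow>
       real (card (RN E (A \<union> B) \<nu> S)) \<ge> real (card S) + \<nu> * real (card (A \<union> B)))"

text \<open>The set of parts of \<V> = {V_1,...,V_k, W_1,...,W_l}, W_j = A_j \<union> B_j (indices 0-based).\<close>
definition parts :: "(nat \<Rightarrow> 'a set) \<Rightarrow> (nat \<Rightarrow> 'a set) \<Rightarrow> (nat \<Rightarrow> 'a set) \<Rightarrow> nat \<Rightarrow> nat \<Rightarrow> 'a set set" where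
  "parts Vs As Bs k l = Vs ` {..<k} \<union> (\<lambda>j. As j \<union> Bs j) ` {..<l}"

definition robust_partition ::
  "'a set \<Rightarrow> ('a \<Rightarrow> 'a \<Rightarrow> bool) \<Rightarrow> nat \<Rightarrow> real \<Rightarrow> real \<Rightarrow> real \<Rightarrow> nat \<Rightarrow> nat \<Rightarrow>
   (nat \<Rightarrow> 'a set) \<Rightarrow> (nat \<Rightarrow> 'a set) \<Rightarrow> (nat \<Rightarrow> 'a set) \<Rightarrow> bool" where
  "robust_partition V E D \<rho> \<nu> \<tau> k l Vs As Bs \<longleftrightarrow>
   (let n = real (card V); W = (\<lambda>j. As j \<union> Bs j); P = parts Vs As Bs k l in
     0 < \<rho> \<and> \<rho> \<le> \<nu> \<and> \<nu> \<le> \<tau> \<and> \<tau> < 1 \<and>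
     \<comment> \<open>(D1)\<close>
     \<Union> P = V \<and>
     (\<forall>i<k. \<forall>i'<k. i \<noteq> i' \<longrightarrow> Vs i \<inter> Vs i' = {}) \<and>
     (\<forall>j<l. \<forall>j'<l. j \<noteq> j' \<longrightarrow> W j \<inter> W j' = {}) \<and>
     (\<forall>i<k. \<forall>j<l. Vs i \<inter> W j = {}) \<and>
     (\<forall>j<l. As j \<inter> Bs j = {}) \<and>
     \<comment> \<open>(D2)\<close>
     (\<forall>i<k. real (card (Vs i)) \<ge> sqrt \<rho> * n \<and> real (e E (Vs i) (V - Vs i)) \<le> \<rho> * n\<^sup>2 \<and>
        robust_expander E (Vs i) \<nu> \<tau>) \<and>
     \<comment> \<open>(D3)\<close>
     (\<forall>j<l. real (card (As j)) \<ge> sqrt \<rho> * n \<and> real (card (Bs j)) \<ge> sqrt \<rho> * n \<and>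
        \<bar>real (card (As j)) - real (card (Bs j))\<bar> \<le> \<rho> * n \<and>
        real (e E (As j) (V - Bs j) + e E (Bs j) (V - As j)) \<le> \<rho> * n\<^sup>2 \<and>
        bip_robust_expander E (As j) (Bs j) \<nu> \<tau>) \<and>
     \<comment> \<open>(D4)\<close>
     (\<forall>X\<in>P. \<forall>X'\<in>P. \<forall>x\<in>X. deg E X x \<ge> deg E X' x) \<and>
     \<comment> \<open>(D5)\<close>
     (\<forall>j<l. (\<forall>u\<in>As j. deg E (Bs j) u \<ge> deg E (As j) u) \<and>
            (\<forall>v\<in>Bs j. deg E (As j) v \<ge> deg E (Bs j) v)) \<and>
     \<comment> \<open>(D6)\<close>
     real (k + 2 * l) \<le> of_int \<lfloor>(1 + root 3 \<rho>) * n / real D\<rfloor> \<and>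
     \<comment> \<open>(D7)\<close>
     (\<forall>X\<in>P. real (card {x \<in> X. real (deg E X x) < real D - \<rho> * n}) \<le> \<rho> * n))"

definition sparse_cut :: "('a \<Rightarrow> 'a \<Rightarrow> bool) \<Rightarrow> real \<Rightarrow> 'a set \<Rightarrow> 'a set \<Rightarrow> 'a set \<Rightarrow> bool" where
  "sparse_cut E \<zeta> A X Y \<longleftrightarrow> X \<noteq> {} \<and> Y \<noteq> {} \<and> X \<union> Y = A \<and> X \<inter> Y = {} \<and>
     real (e E X Y) \<le> \<zeta> * real (card X) * real (card Y)"

definition almost_bip_wit ::
  "'a set \<Rightarrow> ('a \<Rightarrow> 'a \<Rightarrow> bool) \<Rightarrow> real \<Rightarrow> 'a set \<Rightarrow> 'a set \<Rightarrow> 'a set \<Rightarrow> bool" where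
  "almost_bip_wit V E \<beta> A X Y \<longleftrightarrow> X \<union> Y = A \<and> X \<inter> Y = {} \<and>
     real (card (edges_between E A A - edges_between E X Y)) \<le> \<beta> * (real (card V))\<^sup>2"

definition almost_bipartite :: "'a set \<Rightarrow> ('a \<Rightarrow> 'a \<Rightarrow> bool) \<Rightarrow> real \<Rightarrow> 'a set \<Rightarrow> bool" where
  "almost_bipartite V E \<beta> A \<longleftrightarrow> (\<exists>X Y. almost_bip_wit V E \<beta> A X Y)"

definition far_from_bipartite :: "'a set \<Rightarrow> ('a \<Rightarrow> 'a \<Rightarrow> bool) \<Rightarrow> real \<Rightarrow> 'a set \<Rightarrow> bool" where
  "far_from_bipartite V E \<gamma> A \<longleftrightarrow> \<not> almost_bipartite V E \<gamma> A"

definition clustering ::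
  "'a set \<Rightarrow> ('a \<Rightarrow> 'a \<Rightarrow> bool) \<Rightarrow> real \<Rightarrow> real \<Rightarrow> real \<Rightarrow> real \<Rightarrow> real \<Rightarrow> 'a set set \<Rightarrow> bool" where
  "clustering V E \<zeta> \<delta> \<gamma> \<beta> \<eta> P \<longleftrightarrow>
    (let n = real (card V) in
     \<Union> P = V \<and> {} \<notin> P \<and> (\<forall>X\<in>P. \<forall>Y\<in>P. X \<noteq> Y \<longrightarrow> X \<inter> Y = {}) \<and>
     real (card {{x, y} | x y. E x y \<and> (\<exists>X\<in>P. x \<in> X \<and> y \<notin> X)}) \<le> \<eta> * n\<^sup>2 \<and>
     (\<forall>A\<in>P. \<forall>v\<in>A. real (deg E A v) \<ge> \<delta> * n) \<and>
     (\<forall>A\<in>P. \<not> (\<exists>X Y. sparse_cut E \<zeta> A X Y)) \<and>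
     (\<forall>A\<in>P. almost_bipartite V E \<beta> A \<or> far_from_bipartite V E \<gamma> A))"

end

theory Submission
  imports Defs
begin

text \<open>
  By (D4) every vertex has at least a 1/|\<V>| share of its D neighbours in its own part, and by (D6)
  there are at most 2n/D parts, so every part has minimum degree at least D^2/2n \<ge> \<alpha>^2 n/2.
  A sparse cut of a part would then have either a small side, whose vertices send almost all of
  this degree across, or two sides large enough for robust expansion to force about \<nu>^2 N^2
  crossing edges. In a bipartite part A \<union> B the bound on e(A, A) from (D3) makes vertices with
  many neighbours in A rare, so expansion out of X \<inter> A lands in X \<inter> B; doing this for both sides
  of the cut contradicts |A| \<approx> |B|. The same two estimates put many edges inside the larger side
  of any bipartition of V_i, while A_j, B_j witness almost-bipartiteness by (D3), and at most
  (k + l)\<rho>n^2 \<le> 2\<rho>n^2/\<alpha> edges join different parts. The parameters are obtained by iterating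
  x \<mapsto> x f(x)/100, which stays below both f and x/100.
\<close>

section \<open>Degrees and edge counts\<close>

lemma graph_finite: "graph V E \<Longrightarrow> finite V"
  by (simp add: graph_def)

lemma graph_edgeD: "graph V E \<Longrightarrow> E x y \<Longrightarrow> x \<in> V \<and> y \<in> V \<and> x \<noteq> y \<and> E y x"
  by (simp add: graph_def)

lemma finite_neighbours: "graph V E \<Longrightarrow> finite {u \<in> S. E v u}"
  by (rule finite_subset[of _ V]) (auto dest: graph_edgeD simp: graph_finite)

lemma deg_le_card: "finite S \<Longrightarrow> deg E S v \<le> card S"
  unfolding deg_def by (rule card_mono) auto

lemma deg_mono: "graph V E \<Longrightarrow> S \<subseteq> T \<Longrightarrow> deg E S v \<le> deg E T v"
  unfolding deg_def by (rule card_mono[OF finite_neighbours]) auto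

lemma deg_Un_disjoint:
  assumes "graph V E" "S \<inter> T = {}"
  shows "deg E (S \<union> T) v = deg E S v + deg E T v"
proof -
  have "{u \<in> S \<union> T. E v u} = {u \<in> S. E v u} \<union> {u \<in> T. E v u}" by auto
  then show ?thesis unfolding deg_def using assms
    by (simp add: card_Un_disjoint finite_neighbours disjoint_iff)
qed

lemma deg_split:
  assumes "graph V E" "B \<subseteq> X \<union> Y" "X \<inter> Y = {}"
  shows "deg E B v = deg E (X \<inter> B) v + deg E (Y \<inter> B) v"
proof -
  have "B = (X \<inter> B) \<union> (Y \<inter> B)" using assms by auto
  then show ?thesis using deg_Un_disjoint[OF assms(1), of "X \<inter> B" "Y \<inter> B" v] assms(3) by auto
qed

lemma deg_le_card_Int_plus_deg:
  assumes "graph V E" "finite X" "S \<subseteq> X \<union> Y" "X \<inter> Y = {}"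
  shows "real (deg E S v) \<le> real (card (X \<inter> S)) + real (deg E Y v)"
proof -
  have "deg E S v = deg E (X \<inter> S) v + deg E (Y \<inter> S) v" by (rule deg_split[OF assms(1,3,4)])
  moreover have "deg E (X \<inter> S) v \<le> card (X \<inter> S)" using assms(2) by (intro deg_le_card) auto
  moreover have "deg E (Y \<inter> S) v \<le> deg E Y v" by (rule deg_mono[OF assms(1)]) auto
  ultimately show ?thesis by linarith
qed

lemma card_Int_split:
  assumes "finite A" "A \<subseteq> X \<union> Y" "X \<inter> Y = {}"
  shows "card (X \<inter> A) + card (Y \<inter> A) = card A"
proof -
  have "A = (X \<inter> A) \<union> (Y \<inter> A)" using assms by auto
  moreover have "card ((X \<inter> A) \<union> (Y \<inter> A)) = card (X \<inter> A) + card (Y \<inter> A)"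
    using assms by (intro card_Un_disjoint) auto
  ultimately show ?thesis by simp
qed

definition arcs :: "('a \<Rightarrow> 'a \<Rightarrow> bool) \<Rightarrow> 'a set \<Rightarrow> 'a set \<Rightarrow> ('a \<times> 'a) set" where
  "arcs E X Y = {(x, y). x \<in> X \<and> y \<in> Y \<and> E x y}"

lemma card_arcs:
  assumes "graph V E" "finite X"
  shows "card (arcs E X Y) = (\<Sum>x\<in>X. deg E Y x)"
proof -
  have "arcs E X Y = Sigma X (\<lambda>x. {y \<in> Y. E x y})" by (auto simp: arcs_def)
  then show ?thesis using assms by (simp add: card_SigmaI finite_neighbours deg_def)
qed

lemma edges_between_eq_image_arcs: "edges_between E X Y = (\<lambda>(x, y). {x, y}) ` arcs E X Y"
  by (auto simp: edges_between_def arcs_def)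

lemma finite_edges_between:
  assumes "graph V E"
  shows "finite (edges_between E X Y)"
proof -
  have "arcs E X Y \<subseteq> V \<times> V" by (auto simp: arcs_def dest: graph_edgeD[OF assms])
  then show ?thesis
    using graph_finite[OF assms] by (simp add: edges_between_eq_image_arcs finite_subset)
qed

lemma edges_between_commute: "graph V E \<Longrightarrow> edges_between E X Y = edges_between E Y X"
  unfolding edges_between_def by (auto dest: graph_edgeD)

lemma e_commute: "graph V E \<Longrightarrow> e E X Y = e E Y X"
  by (simp add: e_def edges_between_commute)

lemma e_eq_sum_deg:
  assumes "graph V E" "finite X" "X \<inter> Y = {}"
  shows "real (e E X Y) = (\<Sum>x\<in>X. real (deg E Y x))"
proof -
  have "inj_on (\<lambda>(x, y). {x, y}) (arcs E X Y)"
    using assms(3) unfolding inj_on_def arcs_def by (auto simp: doubleton_eq_iff)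
  then have "e E X Y = card (arcs E X Y)"
    by (simp add: e_def edges_between_eq_image_arcs card_image)
  then show ?thesis using card_arcs[OF assms(1,2)] by simp
qed

text \<open>An edge inside X is counted twice by the degree sum; the orientation x < y tells the
  two arcs apart.\<close>
lemma sum_deg_le_twice_e:
  fixes E :: "'a::linorder \<Rightarrow> 'a \<Rightarrow> bool"
  assumes "graph V E" "finite X"
  shows "(\<Sum>x\<in>X. real (deg E Y x)) \<le> 2 * real (e E X Y)"
proof -
  let ?h = "\<lambda>(x::'a, y). ({x, y}, x < y)"
  have "inj_on ?h (arcs E X Y)"
    unfolding inj_on_def arcs_def by (auto simp: doubleton_eq_iff dest: graph_edgeD[OF assms(1)])
  then have "card (arcs E X Y) = card (?h ` arcs E X Y)" by (simp add: card_image)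
  also have "\<dots> \<le> card (edges_between E X Y \<times> (UNIV :: bool set))"
    using finite_edges_between[OF assms(1)] by (intro card_mono) (auto simp: edges_between_eq_image_arcs)
  also have "\<dots> = 2 * e E X Y" by (simp add: card_cartesian_product e_def)
  finally show ?thesis using card_arcs[OF assms] by (simp flip: of_nat_sum)
qed

lemma card_mult_le_sum:
  fixes g :: "'a \<Rightarrow> real"
  assumes "finite Y" "S \<subseteq> Y" "\<forall>y\<in>S. c \<le> g y" "\<forall>y\<in>Y. 0 \<le> g y"
  shows "real (card S) * c \<le> (\<Sum>y\<in>Y. g y)"
proof -
  have "real (card S) * c = (\<Sum>y\<in>S. c)" by simp
  also have "\<dots> \<le> (\<Sum>y\<in>S. g y)" using assms(3) by (intro sum_mono) auto
  also have "\<dots> \<le> (\<Sum>y\<in>Y. g y)" using assms finite_subset by (intro sum_mono2) auto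
  finally show ?thesis .
qed

lemma card_mult_le_e:
  assumes "graph V E" "finite X" "X \<inter> Y = {}" "S \<subseteq> X" "\<forall>x\<in>S. b \<le> real (deg E Y x)"
  shows "real (card S) * b \<le> real (e E X Y)"
  using card_mult_le_sum[OF assms(2,4,5)] e_eq_sum_deg[OF assms(1-3)] by simp

section \<open>Sparse cuts of robust expanders\<close>

lemma e_gt_of_min_deg_across:
  assumes "graph V E" "finite X" "X \<inter> Y = {}" "X \<noteq> {}"
    and "\<forall>x\<in>X. b \<le> real (deg E Y x)" "\<zeta> * real (card Y) < b"
  shows "\<zeta> * real (card X) * real (card Y) < real (e E X Y)"
proof -
  have "0 < real (card X)" using assms(2,4) by (simp add: card_gt_0_iff)
  then have "real (card X) * (\<zeta> * real (card Y)) < real (card X) * b"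
    using assms(6) by simp
  moreover have "real (card X) * b \<le> real (e E X Y)"
    using card_mult_le_e[OF assms(1-3) order_refl assms(5)] .
  ultimately show ?thesis by (simp add: mult_ac)
qed

lemma min_deg_le_card:
  assumes "graph V E" "U \<subseteq> V" "U \<noteq> {}" "\<forall>v\<in>U. a \<le> real (deg E U v)"
  shows "a \<le> real (card U)"
proof -
  obtain u where "u \<in> U" using assms(3) by blast
  moreover have "finite U" using assms(1,2) graph_finite finite_subset by blast
  ultimately show ?thesis using assms(4) deg_le_card[of U E u] by force
qed

lemma deg_ge_min_deg_minus_card:
  assumes "graph V E" "finite S" "S \<inter> T = {}" "v \<in> S \<union> T"
    and "\<forall>u\<in>S \<union> T. a \<le> real (deg E (S \<union> T) u)"
  shows "a - real (card S) \<le> real (deg E T v)"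
  using deg_le_card_Int_plus_deg[OF assms(1,2) _ assms(3), of "S \<union> T" v] bspec[OF assms(5,4)]
  by (simp add: Int_absorb2)

lemma e_gt_small_side:
  assumes g: "graph V E" and UV: "U \<subseteq> V"
    and mind: "\<forall>v\<in>U. c * real (card V) \<le> real (deg E U v)"
    and XY: "X \<union> Y = U" "X \<inter> Y = {}" "X \<noteq> {}"
    and small: "real (card X) < \<tau> * real (card U)"
    and "\<zeta> < c - \<tau>" "0 \<le> \<zeta>" "0 \<le> \<tau>"
  shows "\<zeta> * real (card X) * real (card Y) < real (e E X Y)"
proof -
  let ?n = "real (card V)"
  have fV: "finite V" using g graph_finite by blast
  have fX: "finite X" using fV UV XY finite_subset by blast
  have n0: "0 < ?n" using fV UV XY by (auto simp: card_gt_0_iff)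
  have "card U \<le> card V" "card Y \<le> card V" using fV UV XY card_mono[of V] by auto
  then have Un: "\<tau> * real (card U) \<le> \<tau> * ?n" and Yn: "\<zeta> * real (card Y) \<le> \<zeta> * ?n"
    using assms(9,10) by (simp_all add: mult_left_mono)
  have "\<forall>x\<in>X. (c - \<tau>) * ?n \<le> real (deg E Y x)"
  proof
    fix x assume "x \<in> X"
    then have "c * ?n - real (card X) \<le> real (deg E Y x)"
      using deg_ge_min_deg_minus_card[OF g fX XY(2) _ mind[folded XY(1)]] by blast
    then show "(c - \<tau>) * ?n \<le> real (deg E Y x)" using small Un by (simp add: algebra_simps)
  qed
  moreover have "\<zeta> * real (card Y) < (c - \<tau>) * ?n"
    using Yn mult_strict_right_mono[OF assms(8) n0] by linarith
  ultimately show ?thesis by (rule e_gt_of_min_deg_across[OF g fX XY(2,3)])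
qed

lemma robust_expander_RN_outside:
  assumes "robust_expander E U \<nu> \<tau>" "finite U" "X \<subseteq> U"
    and "\<tau> * real (card U) \<le> real (card X)" "real (card X) \<le> (1 - \<tau>) * real (card U)"
  shows "\<nu> * real (card U) \<le> real (card (RN E U \<nu> X - X))"
proof -
  have "real (card X) + \<nu> * real (card U) \<le> real (card (RN E U \<nu> X))"
    using assms(1,3-5) unfolding robust_expander_def by blast
  moreover have "finite (RN E U \<nu> X - X \<union> X)"
    using assms(2,3) finite_subset[of "RN E U \<nu> X" U] finite_subset[of X U] by (auto simp: RN_def)
  then have "card (RN E U \<nu> X) \<le> card (RN E U \<nu> X - X \<union> X)"
    by (intro card_mono) auto
  then have "card (RN E U \<nu> X) \<le> card (RN E U \<nu> X - X) + card X"
    using card_Un_le order_trans by blast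
  ultimately show ?thesis by linarith
qed

lemma e_gt_balanced_cut:
  assumes g: "graph V E" and UV: "U \<subseteq> V" and rob: "robust_expander E U \<nu> \<tau>"
    and XY: "X \<union> Y = U" "X \<inter> Y = {}" "X \<noteq> {}"
    and bal: "\<tau> * real (card U) \<le> real (card X)" "real (card X) \<le> (1 - \<tau>) * real (card U)"
    and "\<zeta> < \<nu>\<^sup>2" "0 \<le> \<zeta>" "0 < \<nu>"
  shows "\<zeta> * real (card X) * real (card Y) < real (e E X Y)"
proof -
  let ?N = "real (card U)" and ?R = "RN E U \<nu> X - X"
  have fU: "finite U" using g graph_finite UV finite_subset by blast
  have fY: "finite Y" using fU XY finite_subset by blast
  have N0: "0 < ?N" using fU XY by (auto simp: card_gt_0_iff)
  have R: "\<nu> * ?N \<le> real (card ?R)"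
    using robust_expander_RN_outside[OF rob fU _ bal] XY by blast
  have "real (card ?R) * (\<nu> * ?N) \<le> real (e E Y X)"
    using XY by (intro card_mult_le_e[OF g fY]) (auto simp: RN_def)
  moreover have "(\<nu> * ?N) * (\<nu> * ?N) \<le> real (card ?R) * (\<nu> * ?N)"
    using R assms(11) N0 by (intro mult_right_mono) auto
  ultimately have "\<nu>\<^sup>2 * ?N\<^sup>2 \<le> real (e E X Y)"
    using e_commute[OF g, of X Y] by (simp add: power2_eq_square algebra_simps)
  moreover have "card X \<le> card U" "card Y \<le> card U" using fU XY card_mono[of U] by auto
  then have "\<zeta> * real (card X) * real (card Y) \<le> \<zeta> * ?N * ?N"
    using assms(10) by (intro mult_mono) (auto intro: mult_left_mono)
  moreover have "\<zeta> * ?N * ?N < \<nu>\<^sup>2 * ?N\<^sup>2" using assms(9) N0 by (simp add: power2_eq_square)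
  ultimately show ?thesis by linarith
qed

lemma robust_expander_no_sparse_cut:
  assumes g: "graph V E" and UV: "U \<subseteq> V" and rob: "robust_expander E U \<nu> \<tau>"
    and mind: "\<forall>v\<in>U. c * real (card V) \<le> real (deg E U v)"
    and "\<zeta> < \<nu>\<^sup>2" "\<zeta> < c - \<tau>" "0 \<le> \<zeta>" "0 < \<nu>" "0 \<le> \<tau>"
  shows "\<not> sparse_cut E \<zeta> U X Y"
proof
  assume "sparse_cut E \<zeta> U X Y"
  then have XY: "X \<noteq> {}" "Y \<noteq> {}" "X \<union> Y = U" "X \<inter> Y = {}"
    and sparse: "real (e E X Y) \<le> \<zeta> * real (card X) * real (card Y)"
    unfolding sparse_cut_def by auto
  have YX: "Y \<union> X = U" "Y \<inter> X = {}" using XY by auto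
  have "finite U" using g graph_finite UV finite_subset by blast
  then have "card X + card Y = card U"
    using XY by (metis card_Un_disjoint finite_Un)
  moreover have "(1 - \<tau>) * real (card U) = real (card U) - \<tau> * real (card U)"
    by (simp add: algebra_simps)
  ultimately consider "real (card X) < \<tau> * real (card U)" | "real (card Y) < \<tau> * real (card U)"
    | "\<tau> * real (card U) \<le> real (card X)" "real (card X) \<le> (1 - \<tau>) * real (card U)"
    by linarith
  then show False
  proof cases
    case 1
    from e_gt_small_side[OF g UV mind XY(3,4,1) this assms(6,7,9)] sparse show False by linarith
  next
    case 2
    from e_gt_small_side[OF g UV mind YX XY(2) this assms(6,7,9)] sparse e_commute[OF g, of X Y]
    show False by (simp add: mult_ac)
  next
    case 3
    from e_gt_balanced_cut[OF g UV rob XY(3,4,1) this assms(5,7,8)] sparse show False by linarith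
  qed
qed

lemma sum_inner_deg_ge_of_expansion:
  assumes rob: "robust_expander E U \<nu> \<tau>" and fU: "finite U"
    and XY: "X \<union> Y = U" "X \<inter> Y = {}" "card Y \<le> card X"
    and big: "real (card X) \<le> (1 - \<tau>) * real (card U)" and "\<tau> \<le> 1/2" "0 < \<nu>"
  shows "(\<nu> * real (card U)) * (\<nu> * real (card U)) \<le> (\<Sum>x\<in>X. real (deg E X x))"
proof -
  let ?N = "real (card U)" and ?R = "RN E U \<nu> X"
  have fX: "finite X" and fY: "finite Y" using fU XY by auto
  have "card X + card Y = card U" using XY fX fY by (metis card_Un_disjoint)
  then have "\<tau> * ?N \<le> real (card X)"
    using XY(3) mult_right_mono[OF assms(7), of ?N] by simp
  then have "real (card X) + \<nu> * ?N \<le> real (card ?R)"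
    using rob big XY unfolding robust_expander_def by auto
  moreover have "?R \<subseteq> (?R \<inter> X) \<union> Y" using XY by (auto simp: RN_def)
  then have "card ?R \<le> card ((?R \<inter> X) \<union> Y)" using fX fY by (intro card_mono) auto
  then have "card ?R \<le> card (?R \<inter> X) + card Y" using card_Un_le order_trans by blast
  ultimately have "\<nu> * ?N \<le> real (card (?R \<inter> X))" using XY(3) by linarith
  then have "(\<nu> * ?N) * (\<nu> * ?N) \<le> real (card (?R \<inter> X)) * (\<nu> * ?N)"
    using assms(8) by (intro mult_right_mono) auto
  also have "\<dots> \<le> (\<Sum>x\<in>X. real (deg E X x))"
    by (rule card_mult_le_sum[OF fX]) (auto simp: RN_def)
  finally show ?thesis .
qed

text \<open>If the larger side X is not too large, robust expansion puts many RN-vertices inside X;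
  otherwise Y is tiny and minimum degree forces X to be dense.\<close>
lemma e_larger_side_gt:
  fixes E :: "'a::linorder \<Rightarrow> 'a \<Rightarrow> bool"
  assumes g: "graph V E" and UV: "U \<subseteq> V" and U0: "U \<noteq> {}"
    and rob: "robust_expander E U \<nu> \<tau>"
    and mind: "\<forall>v\<in>U. c * real (card V) \<le> real (deg E U v)"
    and XY: "X \<union> Y = U" "X \<inter> Y = {}" "card Y \<le> card X"
    and gamma: "\<gamma> < \<nu>\<^sup>2 * c\<^sup>2 / 2" "\<gamma> < c * (c - \<tau>) / 4"
    and nu: "0 < \<nu>" and tau: "0 \<le> \<tau>" "\<tau> \<le> 1/2" "\<tau> \<le> c"
  shows "\<gamma> * (real (card V))\<^sup>2 < real (e E X X)"
proof -
  let ?N = "real (card U)" and ?n = "real (card V)"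
  have fV: "finite V" using g graph_finite by blast
  have fU: "finite U" using fV UV finite_subset by blast
  have fX: "finite X" and fY: "finite Y" using fU XY by auto
  have n0: "0 < ?n" using fV UV U0 by (auto simp: card_gt_0_iff)
  have cN: "c * ?n \<le> ?N" by (rule min_deg_le_card[OF g UV U0 mind])
  have "card X + card Y = card U" using XY fX fY by (metis card_Un_disjoint)
  then have Xh: "c * ?n / 2 \<le> real (card X)" and Ysum: "real (card Y) = ?N - real (card X)"
    using XY(3) cN by linarith+
  have inner: "(\<Sum>x\<in>X. real (deg E X x)) \<le> 2 * real (e E X X)"
    by (rule sum_deg_le_twice_e[OF g fX])
  show ?thesis
  proof (cases "real (card X) \<le> (1 - \<tau>) * ?N")
    case True
    have "\<nu> * (c * ?n) \<le> \<nu> * ?N" using cN nu by simp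
    then have "(\<nu> * (c * ?n)) * (\<nu> * (c * ?n)) \<le> (\<nu> * ?N) * (\<nu> * ?N)"
      using cN tau(1,3) n0 nu by (intro mult_mono) auto
    moreover have "\<gamma> * ?n\<^sup>2 < (\<nu>\<^sup>2 * c\<^sup>2 / 2) * ?n\<^sup>2"
      using gamma(1) n0 by (intro mult_strict_right_mono) auto
    ultimately show ?thesis
      using sum_inner_deg_ge_of_expansion[OF rob fU XY True tau(2) nu] inner
      by (simp add: power2_eq_square algebra_simps)
  next
    case False
    then have "real (card Y) \<le> \<tau> * ?n"
      using Ysum tau(1) mult_left_mono[of "card U" "card V" \<tau>] card_mono[OF fV UV]
      by (simp add: algebra_simps)
    have YX: "Y \<inter> X = {}" "Y \<union> X = U" using XY by auto
    have "\<forall>x\<in>X. (c - \<tau>) * ?n \<le> real (deg E X x)"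
    proof
      fix x assume "x \<in> X"
      then have "c * ?n - real (card Y) \<le> real (deg E X x)"
        using deg_ge_min_deg_minus_card[OF g fY YX(1) _ mind[folded YX(2)]] by blast
      then show "(c - \<tau>) * ?n \<le> real (deg E X x)"
        using \<open>real (card Y) \<le> \<tau> * ?n\<close> by (simp add: algebra_simps)
    qed
    then have "real (card X) * ((c - \<tau>) * ?n) \<le> (\<Sum>x\<in>X. real (deg E X x))"
      by (intro card_mult_le_sum[OF fX]) auto
    moreover have "(c * ?n / 2) * ((c - \<tau>) * ?n) \<le> real (card X) * ((c - \<tau>) * ?n)"
      using Xh tau(3) n0 by (intro mult_right_mono) auto
    moreover have "\<gamma> * ?n\<^sup>2 < (c * (c - \<tau>) / 4) * ?n\<^sup>2"
      using gamma(2) n0 by (intro mult_strict_right_mono) auto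
    ultimately show ?thesis using inner by (simp add: power2_eq_square algebra_simps)
  qed
qed

lemma robust_expander_far_from_bipartite:
  fixes E :: "'a::linorder \<Rightarrow> 'a \<Rightarrow> bool"
  assumes g: "graph V E" and UV: "U \<subseteq> V" and U0: "U \<noteq> {}"
    and rob: "robust_expander E U \<nu> \<tau>"
    and mind: "\<forall>v\<in>U. c * real (card V) \<le> real (deg E U v)"
    and params: "\<gamma> < \<nu>\<^sup>2 * c\<^sup>2 / 2" "\<gamma> < c * (c - \<tau>) / 4"
      "0 < \<nu>" "0 \<le> \<tau>" "\<tau> \<le> 1/2" "\<tau> \<le> c"
  shows "far_from_bipartite V E \<gamma> U"
  unfolding far_from_bipartite_def almost_bipartite_def
proof
  assume "\<exists>X Y. almost_bip_wit V E \<gamma> U X Y"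
  then obtain X Y where XY: "X \<union> Y = U" "X \<inter> Y = {}"
    and wit: "real (card (edges_between E U U - edges_between E X Y)) \<le> \<gamma> * (real (card V))\<^sup>2"
    unfolding almost_bip_wit_def by auto
  have "e E Z Z \<le> card (edges_between E U U - edges_between E X Y)" if "Z = X \<or> Z = Y" for Z
    unfolding e_def using that XY finite_edges_between[OF g]
    by (intro card_mono) (auto simp: edges_between_def doubleton_eq_iff)
  then have "real (e E X X) \<le> \<gamma> * (real (card V))\<^sup>2" "real (e E Y Y) \<le> \<gamma> * (real (card V))\<^sup>2"
    using wit by (metis of_nat_le_iff order_trans)+
  moreover have "X \<union> Y = U" "Y \<union> X = U" "X \<inter> Y = {}" "Y \<inter> X = {}" using XY by auto
  ultimately show False
    using e_larger_side_gt[OF g UV U0 rob mind, of X Y] e_larger_side_gt[OF g UV U0 rob mind, of Y X]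
      params by (meson linorder_le_cases not_le)
qed

section \<open>Sparse cuts of bipartite robust expanders\<close>

lemma half_min_deg_across:
  assumes g: "graph V E" and AB: "A \<inter> B = {}"
    and mind: "\<forall>v\<in>A \<union> B. a \<le> real (deg E (A \<union> B) v)"
    and D5: "\<forall>u\<in>A. deg E A u \<le> deg E B u" "\<forall>v\<in>B. deg E B v \<le> deg E A v"
  shows "\<forall>u\<in>A. a / 2 \<le> real (deg E B u)" "\<forall>v\<in>B. a / 2 \<le> real (deg E A v)"
proof -
  have split: "a \<le> real (deg E A w) + real (deg E B w)" if "w \<in> A \<union> B" for w
    using bspec[OF mind that] deg_Un_disjoint[OF g AB, of w] by simp
  show "\<forall>u\<in>A. a / 2 \<le> real (deg E B u)" "\<forall>v\<in>B. a / 2 \<le> real (deg E A v)"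
    using split D5 by (fastforce simp del: of_nat_le_iff simp add: of_nat_le_iff[symmetric])+
qed

text \<open>Either X \<inter> B is small as well, and every vertex of X has many neighbours in Y, or X \<inter> B
  makes up half of X and already its vertices send enough edges to Y.\<close>
lemma bip_e_gt_small_side:
  assumes g: "graph V E" and AV: "A \<subseteq> V" and BV: "B \<subseteq> V" and AB: "A \<inter> B = {}"
    and mind: "\<forall>v\<in>A \<union> B. c * real (card V) \<le> real (deg E (A \<union> B) v)"
    and D5: "\<forall>u\<in>A. deg E A u \<le> deg E B u" "\<forall>v\<in>B. deg E B v \<le> deg E A v"
    and XY: "X \<union> Y = A \<union> B" "X \<inter> Y = {}" "X \<noteq> {}"
    and small: "real (card (X \<inter> A)) < \<tau> * real (card A)"
    and params: "0 \<le> \<zeta>" "0 \<le> \<tau>" "\<zeta> < c/4 - \<tau>" "2 * \<zeta> < c/2 - \<tau>"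
  shows "\<zeta> * real (card X) * real (card Y) < real (e E X Y)"
proof -
  let ?n = "real (card V)"
  have fV: "finite V" using g graph_finite by blast
  have XV: "X \<subseteq> V" "Y \<subseteq> V" using XY(1) AV BV by blast+
  then have fX: "finite X" using fV finite_subset by blast
  have n0: "0 < ?n" using XV XY(3) fV by (auto simp: card_gt_0_iff)
  have "card Y \<le> card V" "card A \<le> card V" using fV AV XV card_mono[of V] by auto
  then have Yn: "\<zeta> * real (card Y) \<le> \<zeta> * ?n" and sXn: "real (card (X \<inter> A)) < \<tau> * ?n"
    using params(1,2) small mult_left_mono[of "real (card A)" ?n \<tau>] by (auto intro: mult_left_mono)
  note halfA = bspec[OF half_min_deg_across(1)[OF g AB mind D5]]
    and halfB = bspec[OF half_min_deg_across(2)[OF g AB mind D5]]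
  have toY: "real (deg E S x) \<le> real (card (X \<inter> S)) + real (deg E Y x)" if "S \<subseteq> A \<union> B" for S x
    using deg_le_card_Int_plus_deg[OF g fX _ XY(2)] that XY(1) by blast
  have toY_B: "(c/2 - \<tau>) * ?n \<le> real (deg E Y x)" if "x \<in> X \<inter> B" for x
    using halfB[of x] toY[of A x] that sXn AB by (auto simp: algebra_simps)
  show ?thesis
  proof (cases "real (card (X \<inter> B)) < c * ?n / 4")
    case True
    have "(c/4 - \<tau>) * ?n \<le> real (deg E Y x)" if x: "x \<in> X" for x
    proof (cases "x \<in> A")
      case True
      then have "c * ?n / 4 \<le> real (deg E Y x)"
        using halfA[of x] toY[of B x] \<open>real (card (X \<inter> B)) < c * ?n / 4\<close> by auto
      moreover have "0 \<le> \<tau> * ?n" using params(2) n0 by simp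
      ultimately show ?thesis by (simp add: algebra_simps)
    next
      case False
      then have "(c/2 - \<tau>) * ?n \<le> real (deg E Y x)" using toY_B x XY(1) by blast
      moreover have "(c/4 - \<tau>) * ?n \<le> (c/2 - \<tau>) * ?n"
        using params n0 by (intro mult_right_mono) auto
      ultimately show ?thesis by linarith
    qed
    moreover have "\<zeta> * real (card Y) < (c/4 - \<tau>) * ?n"
      using Yn mult_strict_right_mono[OF params(3) n0] by linarith
    ultimately show ?thesis using e_gt_of_min_deg_across[OF g fX XY(2,3)] by blast
  next
    case False
    have "X \<subseteq> A \<union> B" using XY(1) by blast
    then have "card X = card (X \<inter> A) + card (X \<inter> B)"
      using card_Int_split[OF fX, of A B] AB by (simp add: Int_commute)
    moreover have "\<tau> \<le> c / 4" using params by linarith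
    then have "\<tau> * ?n \<le> c * ?n / 4" using mult_right_mono[of \<tau> "c/4" ?n] n0 by simp
    ultimately have Xle: "real (card X) \<le> 2 * real (card (X \<inter> B))" using sXn False by linarith
    have "0 < c * ?n / 4" using params n0 by simp
    then have "0 < real (card (X \<inter> B))" using False by linarith
    then have "real (card (X \<inter> B)) * (2 * \<zeta> * ?n) < real (card (X \<inter> B)) * ((c/2 - \<tau>) * ?n)"
      using mult_strict_right_mono[OF params(4) n0] by (rule mult_strict_left_mono[rotated])
    then have "(2 * real (card (X \<inter> B))) * (\<zeta> * ?n) < real (card (X \<inter> B)) * ((c/2 - \<tau>) * ?n)"
      by (simp add: mult_ac)
    moreover have "real (card (X \<inter> B)) * ((c/2 - \<tau>) * ?n) \<le> real (e E X Y)"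
      using toY_B by (intro card_mult_le_e[OF g fX XY(2)]) auto
    moreover have "real (card X) * (\<zeta> * real (card Y)) \<le> (2 * real (card (X \<inter> B))) * (\<zeta> * ?n)"
      using mult_mono[OF Xle Yn] params(1) by simp
    ultimately show ?thesis by (simp add: mult_ac)
  qed
qed

lemma card_high_inner_deg_lt:
  fixes E :: "'a::linorder \<Rightarrow> 'a \<Rightarrow> bool"
  assumes g: "graph V E" and AV: "A \<subseteq> V"
    and eAA: "real (e E A A) \<le> \<rho> * (real (card V))\<^sup>2"
    and "8 * \<rho> * (real (card V))\<^sup>2 < (\<nu> * M)\<^sup>2" "0 < \<nu> * M"
  shows "real (card {v \<in> A. \<nu> * M \<le> real (deg E A v)}) < \<nu> * M / 4"
proof -
  have fA: "finite A" using g graph_finite AV finite_subset by blast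
  have "real (card {v \<in> A. \<nu> * M \<le> real (deg E A v)}) * (\<nu> * M) \<le> (\<Sum>x\<in>A. real (deg E A x))"
    by (rule card_mult_le_sum[OF fA]) auto
  also have "\<dots> \<le> 2 * real (e E A A)" by (rule sum_deg_le_twice_e[OF g fA])
  also have "\<dots> < (\<nu> * M / 4) * (\<nu> * M)"
    using eAA assms(4) by (simp add: power2_eq_square algebra_simps)
  finally show ?thesis by (simp only: mult_less_cancel_right_pos[OF assms(5)])
qed

lemma sparse_cut_few_high_deg_across:
  assumes g: "graph V E" and fY: "finite Y" and XY: "X \<inter> Y = {}" and T: "T \<subseteq> Y"
    and deg: "\<forall>y\<in>T. b \<le> real (deg E X y)" and b: "0 < b"
    and sizes: "real (card X) \<le> M" "real (card Y) \<le> M" and params: "\<zeta> * M * M < b * b / 4" "0 \<le> \<zeta>"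
    and sparse: "real (e E X Y) \<le> \<zeta> * real (card X) * real (card Y)"
  shows "real (card T) < b / 4"
proof (rule ccontr)
  assume "\<not> ?thesis"
  then have "(b / 4) * b \<le> real (card T) * b" using b by (intro mult_right_mono) auto
  also have "\<dots> \<le> real (e E Y X)" using XY T deg by (intro card_mult_le_e[OF g fY]) auto
  also have "\<dots> \<le> \<zeta> * real (card X) * real (card Y)" using sparse e_commute[OF g, of X Y] by simp
  also have "\<dots> \<le> \<zeta> * M * M" using sizes params(2) by (intro mult_mono mult_left_mono) auto
  finally show False using params(1) by simp
qed

text \<open>Robust expansion from a balanced part of the A-side of a sparse cut must land mostly in the
  B-side of the same half, since vertices of A with many neighbours in A are rare.\<close>
lemma sparse_cut_card_Int_B_ge:
  assumes g: "graph V E" and AV: "A \<subseteq> V" and BV: "B \<subseteq> V"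
    and XY: "X \<union> Y = A \<union> B" "X \<inter> Y = {}"
    and bip: "bip_robust_expander E A B \<nu> \<tau>"
    and bal: "\<tau> * real (card A) \<le> real (card (X \<inter> A))"
      "real (card (X \<inter> A)) \<le> (1 - \<tau>) * real (card A)"
    and rare: "real (card {v \<in> A. \<nu> * real (card (A \<union> B)) \<le> real (deg E A v)})
      < \<nu> * real (card (A \<union> B)) / 4"
    and params: "\<zeta> < \<nu>\<^sup>2 / 4" "0 \<le> \<zeta>" "0 < \<nu>" and M0: "A \<union> B \<noteq> {}"
    and sparse: "real (e E X Y) \<le> \<zeta> * real (card X) * real (card Y)"
  shows "real (card (X \<inter> A)) + \<nu> * real (card (A \<union> B)) / 2 \<le> real (card (X \<inter> B))"
proof -
  let ?M = "real (card (A \<union> B))"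
  let ?R = "RN E (A \<union> B) \<nu> (X \<inter> A)"
  let ?H = "{v \<in> A. \<nu> * ?M \<le> real (deg E A v)}"
  have fW: "finite (A \<union> B)" using g graph_finite AV BV finite_subset by (metis le_sup_iff)
  moreover have "X \<subseteq> A \<union> B" "Y \<subseteq> A \<union> B" using XY(1) by blast+
  ultimately have fX: "finite X" and fY: "finite Y" and M: "0 < ?M"
    using M0 finite_subset by (auto simp: card_gt_0_iff)
  have R: "real (card (X \<inter> A)) + \<nu> * ?M \<le> real (card ?R)"
    using bip bal unfolding bip_robust_expander_def by blast
  have sub: "?R \<subseteq> ?H \<union> (?R \<inter> Y) \<union> (X \<inter> B)"
  proof
    fix v assume v: "v \<in> ?R"
    then have "\<nu> * ?M \<le> real (deg E (X \<inter> A) v)" by (auto simp: RN_def)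
    moreover have "deg E (X \<inter> A) v \<le> deg E A v" by (rule deg_mono[OF g]) auto
    ultimately show "v \<in> ?H \<union> (?R \<inter> Y) \<union> (X \<inter> B)" using v XY by (auto simp: RN_def)
  qed
  have "finite (?H \<union> (?R \<inter> Y) \<union> (X \<inter> B))" using fW fX fY by auto
  then have "card ?R \<le> card (?H \<union> (?R \<inter> Y) \<union> (X \<inter> B))" using sub by (rule card_mono)
  also have "\<dots> \<le> card (?H \<union> (?R \<inter> Y)) + card (X \<inter> B)" by (rule card_Un_le)
  also have "\<dots> \<le> card ?H + card (?R \<inter> Y) + card (X \<inter> B)" using card_Un_le[of ?H "?R \<inter> Y"] by simp
  finally have "card ?R \<le> card ?H + card (?R \<inter> Y) + card (X \<inter> B)" .
  moreover have "real (card (?R \<inter> Y)) < \<nu> * ?M / 4"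
  proof (rule sparse_cut_few_high_deg_across[OF g fY XY(2) _ _ _ _ _ _ params(2) sparse])
    show "\<forall>y\<in>?R \<inter> Y. \<nu> * ?M \<le> real (deg E X y)"
    proof
      fix y assume "y \<in> ?R \<inter> Y"
      moreover have "deg E (X \<inter> A) y \<le> deg E X y" by (rule deg_mono[OF g]) auto
      ultimately show "\<nu> * ?M \<le> real (deg E X y)" by (auto simp: RN_def)
    qed
    show "real (card X) \<le> ?M" "real (card Y) \<le> ?M"
      using XY fW by (auto intro: card_mono)
    show "\<zeta> * ?M * ?M < \<nu> * ?M * (\<nu> * ?M) / 4"
      using params(1) M by (simp add: power2_eq_square)
  qed (use params(3) M in auto)
  ultimately show ?thesis using R rare by linarith
qed

lemma few_high_inner_deg_and_balance:
  fixes E :: "'a::linorder \<Rightarrow> 'a \<Rightarrow> bool"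
  assumes g: "graph V E" and AV: "A \<subseteq> V"
    and eAA: "real (e E A A) \<le> \<rho> * (real (card V))\<^sup>2"
    and bal: "real (card B) \<le> real (card A) + \<rho> * real (card V)"
    and cM: "c * real (card V) \<le> M" "0 < M" and n0: "0 < real (card V)"
    and params: "0 < \<nu>" "0 \<le> c" "8 * \<rho> < \<nu>\<^sup>2 * c\<^sup>2" "\<rho> < \<nu> * c"
  shows "real (card {v \<in> A. \<nu> * M \<le> real (deg E A v)}) < \<nu> * M / 4"
    and "real (card B) < real (card A) + \<nu> * M"
proof -
  let ?n = "real (card V)"
  have nuM: "\<nu> * (c * ?n) \<le> \<nu> * M" using cM params(1) by simp
  have "(\<nu> * (c * ?n))\<^sup>2 \<le> (\<nu> * M)\<^sup>2" using nuM params(1,2) n0 by (intro power_mono) auto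
  moreover have "8 * \<rho> * ?n\<^sup>2 < (\<nu>\<^sup>2 * c\<^sup>2) * ?n\<^sup>2"
    using params(3) n0 by (intro mult_strict_right_mono) auto
  ultimately have "8 * \<rho> * ?n\<^sup>2 < (\<nu> * M)\<^sup>2" by (simp add: power_mult_distrib mult_ac)
  moreover have "0 < \<nu> * M" using params(1) cM by simp
  ultimately show "real (card {v \<in> A. \<nu> * M \<le> real (deg E A v)}) < \<nu> * M / 4"
    by (rule card_high_inner_deg_lt[OF g AV eAA])
  have "\<rho> * ?n < \<nu> * (c * ?n)" using mult_strict_right_mono[OF params(4) n0] by (simp add: mult_ac)
  then show "real (card B) < real (card A) + \<nu> * M" using bal nuM by linarith
qed

text \<open>In the balanced case both halves of the cut contain, on the B-side, \<nu>|A \<union> B|/2 more vertices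
  than on the A-side; summing the two halves contradicts |B| \<approx> |A|.\<close>
lemma bip_robust_expander_no_sparse_cut:
  fixes E :: "'a::linorder \<Rightarrow> 'a \<Rightarrow> bool"
  assumes g: "graph V E" and AV: "A \<subseteq> V" and BV: "B \<subseteq> V" and AB: "A \<inter> B = {}" and A0: "A \<noteq> {}"
    and mind: "\<forall>v\<in>A \<union> B. c * real (card V) \<le> real (deg E (A \<union> B) v)"
    and D5: "\<forall>u\<in>A. deg E A u \<le> deg E B u" "\<forall>v\<in>B. deg E B v \<le> deg E A v"
    and bip: "bip_robust_expander E A B \<nu> \<tau>"
    and eAA: "real (e E A A) \<le> \<rho> * (real (card V))\<^sup>2"
    and bal: "real (card B) \<le> real (card A) + \<rho> * real (card V)"
    and params: "\<zeta> < \<nu>\<^sup>2 / 4" "0 \<le> \<zeta>" "0 < \<nu>" "0 \<le> \<tau>" "\<zeta> < c/4 - \<tau>" "2 * \<zeta> < c/2 - \<tau>"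
      "8 * \<rho> < \<nu>\<^sup>2 * c\<^sup>2" "\<rho> < \<nu> * c"
  shows "\<not> sparse_cut E \<zeta> (A \<union> B) X Y"
proof
  assume "sparse_cut E \<zeta> (A \<union> B) X Y"
  then have XY: "X \<noteq> {}" "Y \<noteq> {}" "X \<union> Y = A \<union> B" "X \<inter> Y = {}"
    and sparse: "real (e E X Y) \<le> \<zeta> * real (card X) * real (card Y)"
    unfolding sparse_cut_def by auto
  let ?n = "real (card V)" and ?M = "real (card (A \<union> B))"
  have YX: "Y \<union> X = A \<union> B" "Y \<inter> X = {}" using XY by auto
  have sparse': "real (e E Y X) \<le> \<zeta> * real (card Y) * real (card X)"
    using sparse e_commute[OF g, of X Y] by (simp add: mult_ac)
  have fV: "finite V" using g graph_finite by blast
  have fA: "finite A" and fB: "finite B" using fV AV BV finite_subset by auto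
  have n0: "0 < ?n" using fV AV A0 by (auto simp: card_gt_0_iff)
  have c0: "0 \<le> c" using params by linarith
  have cM: "c * ?n \<le> ?M" using min_deg_le_card[OF g _ _ mind] AV BV A0 by blast
  have M0: "0 < ?M" using A0 fA fB by (simp add: card_gt_0_iff)
  note rare = few_high_inner_deg_and_balance(1)[OF g AV eAA bal cM M0 n0 params(3) c0 params(7,8)]
    and balM = few_high_inner_deg_and_balance(2)[OF g AV eAA bal cM M0 n0 params(3) c0 params(7,8)]
  have csA: "card (X \<inter> A) + card (Y \<inter> A) = card A" by (rule card_Int_split[OF fA]) (use XY in auto)
  have csB: "card (X \<inter> B) + card (Y \<inter> B) = card B" by (rule card_Int_split[OF fB]) (use XY in auto)
  have "(1 - \<tau>) * real (card A) = real (card A) - \<tau> * real (card A)" by (simp add: algebra_simps)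
  then consider "real (card (X \<inter> A)) < \<tau> * real (card A)" | "real (card (Y \<inter> A)) < \<tau> * real (card A)"
    | "\<tau> * real (card A) \<le> real (card (X \<inter> A))" "real (card (X \<inter> A)) \<le> (1 - \<tau>) * real (card A)"
      "\<tau> * real (card A) \<le> real (card (Y \<inter> A))" "real (card (Y \<inter> A)) \<le> (1 - \<tau>) * real (card A)"
    using csA by linarith
  then show False
  proof cases
    case 1
    from bip_e_gt_small_side[OF g AV BV AB mind D5 XY(3,4,1) this params(2,4,5,6)] sparse
    show False by linarith
  next
    case 2
    from bip_e_gt_small_side[OF g AV BV AB mind D5 YX XY(2) this params(2,4,5,6)] sparse'
    show False by linarith
  next
    case 3
    have "A \<union> B \<noteq> {}" using A0 by blast
    from sparse_cut_card_Int_B_ge[OF g AV BV XY(3,4) bip 3(1,2) rare params(1-3) this sparse]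
      sparse_cut_card_Int_B_ge[OF g AV BV YX bip 3(3,4) rare params(1-3) this sparse']
    show False using csA csB balM by linarith
  qed
qed

section \<open>Robust partitions\<close>

lemma regular_le_card_parts_mult_deg:
  assumes reg: "regular V E D" and fP: "finite P" and UP: "\<Union>P = V"
    and D4: "\<forall>X'\<in>P. deg E X' v \<le> deg E X v" and X: "X \<in> P" "v \<in> X"
  shows "D \<le> card P * deg E X v"
proof -
  have "v \<in> V" using UP X by blast
  then have "D = card {u \<in> V. E v u}" using reg unfolding regular_def deg_def by simp
  also have "{u \<in> V. E v u} = (\<Union>Y\<in>P. {u \<in> Y. E v u})" using UP by blast
  also have "card \<dots> \<le> (\<Sum>Y\<in>P. deg E Y v)" unfolding deg_def by (rule card_UN_le[OF fP])
  also have "\<dots> \<le> (\<Sum>Y\<in>P. deg E X v)" using D4 by (intro sum_mono) blast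
  finally show ?thesis by simp
qed

lemma quadratic_deg_bound:
  fixes p d D n \<alpha> :: real
  assumes "D \<le> p * d" "p * D \<le> 2 * n" "\<alpha> * n \<le> D" "0 \<le> \<alpha>" "0 < n" "0 \<le> d"
  shows "\<alpha>\<^sup>2 / 2 * n \<le> d"
proof -
  have "0 \<le> \<alpha> * n" using assms(4,5) by simp
  then have D0: "0 \<le> D" using assms(3) by linarith
  have "(\<alpha> * n) * (\<alpha> * n) \<le> D * D" using assms(3-5) D0 by (intro mult_mono) auto
  also have "\<dots> \<le> (p * d) * D" using assms(1) D0 by (rule mult_right_mono)
  also have "\<dots> = (p * D) * d" by (simp add: mult_ac)
  also have "\<dots> \<le> (2 * n) * d" using assms(2,6) by (rule mult_right_mono)
  finally have "(\<alpha>\<^sup>2 / 2 * n) * n \<le> d * n" by (simp add: power2_eq_square mult_ac)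
  then show ?thesis using assms(5) by (simp add: mult_le_cancel_right)
qed

lemma parts_cases:
  assumes "X \<in> parts Vs As Bs k l"
  obtains i where "i < k" "X = Vs i" | j where "j < l" "X = As j \<union> Bs j"
  using assms unfolding parts_def by blast

lemma robust_partitionD:
  assumes "robust_partition V E D \<rho> \<nu> \<tau> k l Vs As Bs"
  shows "0 < \<rho>" "\<rho> \<le> \<nu>" "\<nu> \<le> \<tau>" "\<tau> < 1"
    and "\<Union> (parts Vs As Bs k l) = V"
    and "\<forall>i<k. \<forall>i'<k. i \<noteq> i' \<longrightarrow> Vs i \<inter> Vs i' = {}"
    and "\<forall>j<l. \<forall>j'<l. j \<noteq> j' \<longrightarrow> (As j \<union> Bs j) \<inter> (As j' \<union> Bs j') = {}"
    and "\<forall>i<k. \<forall>j<l. Vs i \<inter> (As j \<union> Bs j) = {}"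
    and "\<forall>j<l. As j \<inter> Bs j = {}"
    and "\<forall>i<k. real (card (Vs i)) \<ge> sqrt \<rho> * real (card V) \<and>
        real (e E (Vs i) (V - Vs i)) \<le> \<rho> * (real (card V))\<^sup>2 \<and> robust_expander E (Vs i) \<nu> \<tau>"
    and "\<forall>j<l. real (card (As j)) \<ge> sqrt \<rho> * real (card V) \<and> real (card (Bs j)) \<ge> sqrt \<rho> * real (card V) \<and>
        \<bar>real (card (As j)) - real (card (Bs j))\<bar> \<le> \<rho> * real (card V) \<and>
        real (e E (As j) (V - Bs j) + e E (Bs j) (V - As j)) \<le> \<rho> * (real (card V))\<^sup>2 \<and>
        bip_robust_expander E (As j) (Bs j) \<nu> \<tau>"
    and "\<forall>X\<in>parts Vs As Bs k l. \<forall>X'\<in>parts Vs As Bs k l. \<forall>x\<in>X. deg E X' x \<le> deg E X x"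
    and "\<forall>j<l. (\<forall>u\<in>As j. deg E (As j) u \<le> deg E (Bs j) u) \<and> (\<forall>v\<in>Bs j. deg E (Bs j) v \<le> deg E (As j) v)"
    and "real (k + 2 * l) \<le> of_int \<lfloor>(1 + root 3 \<rho>) * real (card V) / real D\<rfloor>"
  using assms unfolding robust_partition_def Let_def by - (elim conjE, assumption)+

lemma robust_partition_nonempty_parts:
  assumes rp: "robust_partition V E D \<rho> \<nu> \<tau> k l Vs As Bs" and "finite V" "V \<noteq> {}"
  shows "\<forall>i<k. Vs i \<noteq> {}" "\<forall>j<l. As j \<noteq> {}"
proof -
  have "0 < sqrt \<rho> * real (card V)"
    using robust_partitionD(1)[OF rp] assms(2,3) by (simp add: card_gt_0_iff)
  then show "\<forall>i<k. Vs i \<noteq> {}" "\<forall>j<l. As j \<noteq> {}"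
    using robust_partitionD(10,11)[OF rp] by fastforce+
qed

lemma robust_partition_disjoint_parts:
  assumes rp: "robust_partition V E D \<rho> \<nu> \<tau> k l Vs As Bs"
  shows "\<forall>X\<in>parts Vs As Bs k l. \<forall>Y\<in>parts Vs As Bs k l. X \<noteq> Y \<longrightarrow> X \<inter> Y = {}"
proof (intro ballI impI)
  fix X Y assume X: "X \<in> parts Vs As Bs k l" and Y: "Y \<in> parts Vs As Bs k l" and "X \<noteq> Y"
  note disj = robust_partitionD(6-8)[OF rp]
  from X Y \<open>X \<noteq> Y\<close> disj show "X \<inter> Y = {}"
    by (elim parts_cases) (blast, blast, blast, blast)
qed

lemma robust_partition_card_parts:
  assumes rp: "robust_partition V E D \<rho> \<nu> \<tau> k l Vs As Bs" and D0: "0 < D"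
  shows "real (k + 2 * l) * real D \<le> 2 * real (card V)"
proof -
  let ?n = "real (card V)"
  have "root 3 \<rho> \<le> 1"
    using robust_partitionD(2-4)[OF rp] real_root_le_mono[of 3 \<rho> 1] by simp
  then have "(1 + root 3 \<rho>) * ?n / real D \<le> 2 * ?n / real D"
    using D0 by (intro divide_right_mono mult_right_mono) auto
  moreover have "real (k + 2 * l) \<le> (1 + root 3 \<rho>) * ?n / real D"
    using robust_partitionD(14)[OF rp] of_int_floor_le[of "(1 + root 3 \<rho>) * ?n / real D"] by linarith
  ultimately show ?thesis using D0 by (simp add: field_simps)
qed

lemma card_parts_le: "card (parts Vs As Bs k l) \<le> k + l"
proof -
  have "card (parts Vs As Bs k l) \<le> card (Vs ` {..<k}) + card ((\<lambda>j. As j \<union> Bs j) ` {..<l})"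
    unfolding parts_def by (rule card_Un_le)
  also have "\<dots> \<le> k + l"
    using card_image_le[of "{..<k}" Vs] card_image_le[of "{..<l}" "\<lambda>j. As j \<union> Bs j"] by simp
  finally show ?thesis .
qed

lemma robust_partition_min_deg:
  assumes g: "graph V E" and reg: "regular V E D" and Da: "\<alpha> * real (card V) \<le> real D" "0 < \<alpha>"
    and rp: "robust_partition V E D \<rho> \<nu> \<tau> k l Vs As Bs"
    and X: "X \<in> parts Vs As Bs k l" "v \<in> X"
  shows "\<alpha>\<^sup>2 / 2 * real (card V) \<le> real (deg E X v)"
proof -
  let ?P = "parts Vs As Bs k l"
  have UP: "\<Union>?P = V" by (rule robust_partitionD(5)[OF rp])
  have n0: "0 < real (card V)" using UP X graph_finite[OF g] by (auto simp: card_gt_0_iff)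
  have "0 < \<alpha> * real (card V)" using Da(2) n0 by simp
  then have D0: "0 < D" using Da(1) by linarith
  have "real (card ?P) * real D \<le> real (k + 2 * l) * real D"
    using card_parts_le[of Vs As Bs k l] by (intro mult_right_mono) auto
  also have "\<dots> \<le> 2 * real (card V)" by (rule robust_partition_card_parts[OF rp D0])
  finally have cP: "real (card ?P) * real D \<le> 2 * real (card V)" .
  have "D \<le> card ?P * deg E X v"
    using robust_partitionD(12)[OF rp] X
    by (intro regular_le_card_parts_mult_deg[OF reg _ UP _ X]) (auto simp: parts_def)
  then have "real D \<le> real (card ?P) * real (deg E X v)" by (simp flip: of_nat_mult)
  from quadratic_deg_bound[OF this cP Da(1) _ n0] Da(2) show ?thesis by simp
qed

lemma e_mono_right: "graph V E \<Longrightarrow> T \<subseteq> T' \<Longrightarrow> e E S T \<le> e E S T'"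
  unfolding e_def by (rule card_mono[OF finite_edges_between]) (auto simp: edges_between_def)

lemma almost_bip_wit_of_boundary:
  assumes g: "graph V E" and AB: "A \<inter> B = {}"
    and bd: "real (e E A (V - B) + e E B (V - A)) \<le> \<beta> * (real (card V))\<^sup>2"
  shows "almost_bip_wit V E \<beta> (A \<union> B) A B"
proof -
  have "edges_between E (A \<union> B) (A \<union> B) - edges_between E A B
      \<subseteq> edges_between E A (V - B) \<union> edges_between E B (V - A)"
  proof
    fix z assume z: "z \<in> edges_between E (A \<union> B) (A \<union> B) - edges_between E A B"
    then obtain x y where xy: "z = {x, y}" "E x y" "x \<in> A \<union> B" "y \<in> A \<union> B"
      unfolding edges_between_def by blast
    have "x \<in> A \<and> y \<in> A \<or> x \<in> B \<and> y \<in> B"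
      using z xy graph_edgeD[OF g xy(2)] unfolding edges_between_def by (auto simp: insert_commute)
    then show "z \<in> edges_between E A (V - B) \<union> edges_between E B (V - A)"
      using xy AB graph_edgeD[OF g xy(2)] unfolding edges_between_def by blast
  qed
  then have "card (edges_between E (A \<union> B) (A \<union> B) - edges_between E A B)
      \<le> card (edges_between E A (V - B) \<union> edges_between E B (V - A))"
    by (intro card_mono) (simp_all add: finite_edges_between[OF g])
  also have "\<dots> \<le> e E A (V - B) + e E B (V - A)" unfolding e_def by (rule card_Un_le)
  finally show ?thesis unfolding almost_bip_wit_def using AB bd by simp
qed

lemma robust_partition_crossing_edges:
  assumes g: "graph V E" and rp: "robust_partition V E D \<rho> \<nu> \<tau> k l Vs As Bs"
  shows "real (card {{x, y} | x y. E x y \<and> (\<exists>X\<in>parts Vs As Bs k l. x \<in> X \<and> y \<notin> X)})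
    \<le> real (k + l) * (\<rho> * (real (card V))\<^sup>2)"
proof -
  let ?C = "{{x, y} | x y. E x y \<and> (\<exists>X\<in>parts Vs As Bs k l. x \<in> X \<and> y \<notin> X)}"
  let ?m = "\<rho> * (real (card V))\<^sup>2"
  define F1 where "F1 = (\<Union>i<k. edges_between E (Vs i) (V - Vs i))"
  define F2 where "F2 = (\<Union>j<l. edges_between E (As j) (V - Bs j) \<union> edges_between E (Bs j) (V - As j))"
  have "?C \<subseteq> F1 \<union> F2"
  proof
    fix z assume "z \<in> ?C"
    then obtain x y X where z: "z = {x, y}" "E x y" "X \<in> parts Vs As Bs k l" "x \<in> X" "y \<notin> X"
      by blast
    then have "y \<in> V" using graph_edgeD[OF g] by blast
    with z show "z \<in> F1 \<union> F2"
      by (elim parts_cases) (auto simp: F1_def F2_def edges_between_def)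
  qed
  then have "card ?C \<le> card (F1 \<union> F2)"
    by (intro card_mono) (auto simp: F1_def F2_def finite_edges_between[OF g])
  also have "\<dots> \<le> card F1 + card F2" by (rule card_Un_le)
  also have "card F1 \<le> (\<Sum>i<k. e E (Vs i) (V - Vs i))"
    unfolding F1_def e_def by (rule card_UN_le) simp
  also have "card F2 \<le> (\<Sum>j<l. e E (As j) (V - Bs j) + e E (Bs j) (V - As j))"
    unfolding F2_def e_def by (rule order_trans[OF card_UN_le sum_mono]) (simp_all add: card_Un_le)
  finally have "real (card ?C) \<le> (\<Sum>i<k. real (e E (Vs i) (V - Vs i)))
      + (\<Sum>j<l. real (e E (As j) (V - Bs j) + e E (Bs j) (V - As j)))"
    by (simp flip: of_nat_sum of_nat_add)
  also have "\<dots> \<le> (\<Sum>i<k. ?m) + (\<Sum>j<l. ?m)"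
    using robust_partitionD(10,11)[OF rp] by (intro add_mono sum_mono) auto
  finally show ?thesis by (simp add: algebra_simps)
qed

lemma robust_partition_num_parts:
  assumes rp: "robust_partition V E D \<rho> \<nu> \<tau> k l Vs As Bs"
    and "\<alpha> * real (card V) \<le> real D" "0 < \<alpha>" "0 < card V"
  shows "real (k + l) \<le> 2 / \<alpha>"
proof -
  let ?n = "real (card V)"
  have "0 < \<alpha> * ?n" using assms(3,4) by simp
  then have "0 < real D" using assms(2) by linarith
  then have "real (k + 2 * l) * real D \<le> 2 * ?n" using robust_partition_card_parts[OF rp] by simp
  moreover have "real (k + l) * (\<alpha> * ?n) \<le> real (k + 2 * l) * real D"
    using assms(2,3) by (intro mult_mono) auto
  ultimately have "(real (k + l) * \<alpha>) * ?n \<le> 2 * ?n" by (simp add: mult_ac)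
  then have "real (k + l) * \<alpha> \<le> 2" using assms(4) by (simp add: mult_le_cancel_right_pos)
  then show ?thesis using assms(3) by (simp add: pos_le_divide_eq)
qed

lemma clustering_parameter_bounds:
  fixes \<nu> \<tau> \<alpha> \<zeta> \<gamma> \<rho> \<eta> :: real
  assumes nu: "0 < \<nu>" "\<nu> \<le> \<tau>" and tau: "\<tau> \<le> \<alpha>\<^sup>2 / 100000" and alpha: "0 < \<alpha>" "\<alpha> < 1"
    and zeta: "0 \<le> \<zeta>" "\<zeta> \<le> \<nu> ^ 4 / 100" and gamma: "\<gamma> \<le> \<nu> ^ 4 / 10000"
    and rho: "\<rho> \<le> \<nu> ^ 4 * \<eta> / 100000" and eta: "0 < \<eta>" "\<eta> \<le> 1"
  defines "c \<equiv> \<alpha>\<^sup>2 / 2"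
  shows "\<zeta> < \<nu>\<^sup>2 / 4" "\<zeta> < c / 4 - \<tau>" "2 * \<zeta> < c / 2 - \<tau>" "\<tau> \<le> 1 / 2"
    "\<gamma> < \<nu>\<^sup>2 * c\<^sup>2 / 2" "\<gamma> < c * (c - \<tau>) / 4" "8 * \<rho> < \<nu>\<^sup>2 * c\<^sup>2" "\<rho> < \<nu> * c"
    "\<rho> * (2 / \<alpha>) \<le> \<eta>"
proof -
  let ?a = "\<alpha>\<^sup>2"
  have a0: "0 < ?a" using alpha by simp
  have "\<alpha> * \<alpha> \<le> 1 * \<alpha>" using alpha by (intro mult_right_mono) auto
  then have a1: "?a \<le> \<alpha>" by (simp add: power2_eq_square)
  have nu_a: "\<nu> \<le> ?a / 100000" using nu tau by linarith
  then have nu1: "\<nu> < 1" using a1 alpha by linarith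
  have "\<nu> * \<nu> \<le> 1 * \<nu>" using nu nu1 by (intro mult_right_mono) auto
  then have n2: "\<nu>\<^sup>2 \<le> \<nu>" by (simp add: power2_eq_square)
  have n4: "\<nu> ^ 4 = \<nu>\<^sup>2 * \<nu>\<^sup>2" by (simp flip: power_add)
  have n2a: "\<nu>\<^sup>2 \<le> ?a\<^sup>2" using nu nu_a a0 by (intro power_mono) auto
  have nz: "0 < \<nu>\<^sup>2" using nu by simp
  have "\<nu>\<^sup>2 * \<nu>\<^sup>2 \<le> 1 * \<nu>\<^sup>2" using n2 nu1 nz by (intro mult_right_mono) auto
  then have "\<nu> ^ 4 \<le> \<nu>\<^sup>2" using n4 by linarith
  then have z1: "\<zeta> \<le> \<nu>\<^sup>2 / 100" using zeta by linarith
  show "\<zeta> < \<nu>\<^sup>2 / 4" using z1 nz by linarith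
  have "\<zeta> \<le> ?a / 10000000" using z1 n2 nu_a by linarith
  then show "\<zeta> < c / 4 - \<tau>" "2 * \<zeta> < c / 2 - \<tau>" "\<tau> \<le> 1 / 2"
    using tau a0 a1 alpha unfolding c_def by linarith+
  have pa: "0 < \<nu>\<^sup>2 * ?a\<^sup>2" using nz a0 by simp
  have nn: "\<nu>\<^sup>2 * \<nu>\<^sup>2 \<le> \<nu>\<^sup>2 * ?a\<^sup>2" using n2a nz by (intro mult_left_mono) auto
  then have g1: "\<gamma> \<le> \<nu>\<^sup>2 * ?a\<^sup>2 / 10000" using gamma n4 by linarith
  then show "\<gamma> < \<nu>\<^sup>2 * c\<^sup>2 / 2" using pa unfolding c_def by (simp add: power_divide)
  have "c / 2 \<le> c - \<tau>" "0 \<le> c" using tau a0 unfolding c_def by linarith+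
  then have "c * (c / 2) \<le> c * (c - \<tau>)" by (rule mult_left_mono)
  moreover have "c * (c / 2) = ?a\<^sup>2 / 8" unfolding c_def by (simp add: power2_eq_square)
  moreover have "\<nu>\<^sup>2 * ?a\<^sup>2 \<le> 1 * ?a\<^sup>2" using n2 nu1 a0 by (intro mult_right_mono) auto
  moreover have "0 < ?a\<^sup>2" using a0 by simp
  ultimately show "\<gamma> < c * (c - \<tau>) / 4" using g1 by linarith
  have "\<nu> ^ 4 * \<eta> \<le> \<nu> ^ 4 * 1" using nu eta by (intro mult_left_mono) auto
  then have r2: "\<rho> \<le> \<nu>\<^sup>2 * ?a\<^sup>2 / 100000" using rho nn n4 by linarith
  then show "8 * \<rho> < \<nu>\<^sup>2 * c\<^sup>2" using pa unfolding c_def by (simp add: power_divide)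
  have "?a * ?a \<le> 1 * ?a" using a0 a1 alpha by (intro mult_right_mono) auto
  then have "?a\<^sup>2 \<le> ?a" by (simp add: power2_eq_square)
  then have "\<nu>\<^sup>2 * ?a\<^sup>2 \<le> \<nu> * ?a" using n2 nu a0 by (intro mult_mono) auto
  moreover have "0 < \<nu> * ?a" using nu a0 by simp
  ultimately show "\<rho> < \<nu> * c" using r2 unfolding c_def by linarith
  have "\<nu> ^ 4 \<le> \<alpha>" using \<open>\<nu> ^ 4 \<le> \<nu>\<^sup>2\<close> n2 nu_a a1 alpha by linarith
  then have "\<nu> ^ 4 * \<eta> \<le> \<alpha> * \<eta>" using eta by (intro mult_right_mono) auto
  then have "\<rho> * (2 / \<alpha>) \<le> (\<alpha> * \<eta> / 100000) * (2 / \<alpha>)"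
    using rho alpha by (intro mult_right_mono) auto
  also have "\<dots> = \<eta> / 50000" using alpha by simp
  also have "\<dots> \<le> \<eta>" using eta by simp
  finally show "\<rho> * (2 / \<alpha>) \<le> \<eta>" .
qed

lemma robust_partition_expander_part:
  fixes E :: "'a::linorder \<Rightarrow> 'a \<Rightarrow> bool"
  assumes g: "graph V E" and rp: "robust_partition V E D \<rho> \<nu> \<tau> k l Vs As Bs"
    and V0: "V \<noteq> {}"
    and mind: "\<forall>X\<in>parts Vs As Bs k l. \<forall>v\<in>X. c * real (card V) \<le> real (deg E X v)"
    and params: "\<zeta> < \<nu>\<^sup>2" "\<zeta> < c - \<tau>" "0 \<le> \<zeta>" "\<gamma> < \<nu>\<^sup>2 * c\<^sup>2 / 2" "\<gamma> < c * (c - \<tau>) / 4"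
      "\<tau> \<le> 1/2" "\<tau> \<le> c"
  shows "\<forall>i<k. \<not> (\<exists>X Y. sparse_cut E \<zeta> (Vs i) X Y) \<and> far_from_bipartite V E \<gamma> (Vs i)"
proof (intro allI impI)
  fix i assume i: "i < k"
  have mindU: "\<forall>v\<in>Vs i. c * real (card V) \<le> real (deg E (Vs i) v)"
    using mind i by (auto simp: parts_def)
  have UV: "Vs i \<subseteq> V" using robust_partitionD(5)[OF rp] i by (auto simp: parts_def)
  have U0: "Vs i \<noteq> {}" using robust_partition_nonempty_parts(1)[OF rp graph_finite[OF g] V0] i by blast
  have rob: "robust_expander E (Vs i) \<nu> \<tau>" using robust_partitionD(10)[OF rp] i by blast
  have nu: "0 < \<nu>" "0 \<le> \<tau>" using robust_partitionD(1-3)[OF rp] by linarith+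
  show "\<not> (\<exists>X Y. sparse_cut E \<zeta> (Vs i) X Y) \<and> far_from_bipartite V E \<gamma> (Vs i)"
    using robust_expander_no_sparse_cut[OF g UV rob mindU params(1-3) nu]
      robust_expander_far_from_bipartite[OF g UV U0 rob mindU params(4,5) nu params(6,7)] by blast
qed

lemma robust_partition_bipartite_part:
  fixes E :: "'a::linorder \<Rightarrow> 'a \<Rightarrow> bool"
  assumes g: "graph V E" and rp: "robust_partition V E D \<rho> \<nu> \<tau> k l Vs As Bs"
    and V0: "V \<noteq> {}"
    and mind: "\<forall>X\<in>parts Vs As Bs k l. \<forall>v\<in>X. c * real (card V) \<le> real (deg E X v)"
    and params: "\<zeta> < \<nu>\<^sup>2 / 4" "0 \<le> \<zeta>" "\<zeta> < c/4 - \<tau>" "2 * \<zeta> < c/2 - \<tau>"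
      "8 * \<rho> < \<nu>\<^sup>2 * c\<^sup>2" "\<rho> < \<nu> * c" "\<rho> \<le> \<beta>"
  shows "\<forall>j<l. \<not> (\<exists>X Y. sparse_cut E \<zeta> (As j \<union> Bs j) X Y) \<and>
    almost_bip_wit V E \<beta> (As j \<union> Bs j) (As j) (Bs j)"
proof (intro allI impI)
  fix j assume j: "j < l"
  let ?A = "As j" and ?B = "Bs j" and ?n = "real (card V)"
  have mindW: "\<forall>v\<in>?A \<union> ?B. c * ?n \<le> real (deg E (?A \<union> ?B) v)"
    using mind j by (auto simp: parts_def)
  have AV: "?A \<subseteq> V" and BV: "?B \<subseteq> V" using robust_partitionD(5)[OF rp] j by (auto simp: parts_def)
  have AB: "?A \<inter> ?B = {}" using robust_partitionD(9)[OF rp] j by blast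
  have A0: "?A \<noteq> {}" using robust_partition_nonempty_parts(2)[OF rp graph_finite[OF g] V0] j by blast
  have D3: "\<bar>real (card ?A) - real (card ?B)\<bar> \<le> \<rho> * ?n"
    "real (e E ?A (V - ?B) + e E ?B (V - ?A)) \<le> \<rho> * ?n\<^sup>2" "bip_robust_expander E ?A ?B \<nu> \<tau>"
    using robust_partitionD(11)[OF rp] j by blast+
  have D5: "\<forall>u\<in>?A. deg E ?A u \<le> deg E ?B u" "\<forall>v\<in>?B. deg E ?B v \<le> deg E ?A v"
    using robust_partitionD(13)[OF rp] j by blast+
  have nu: "0 < \<nu>" "0 \<le> \<tau>" using robust_partitionD(1-3)[OF rp] by linarith+
  have "e E ?A ?A \<le> e E ?A (V - ?B)" using AV AB by (intro e_mono_right[OF g]) auto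
  then have eAA: "real (e E ?A ?A) \<le> \<rho> * ?n\<^sup>2" using D3(2) by linarith
  have bal: "real (card ?B) \<le> real (card ?A) + \<rho> * ?n" using D3(1) by linarith
  have "\<rho> * ?n\<^sup>2 \<le> \<beta> * ?n\<^sup>2" using params(7) by (intro mult_right_mono) auto
  then have "almost_bip_wit V E \<beta> (?A \<union> ?B) ?A ?B"
    using almost_bip_wit_of_boundary[OF g AB] D3(2) by force
  then show "\<not> (\<exists>X Y. sparse_cut E \<zeta> (?A \<union> ?B) X Y) \<and> almost_bip_wit V E \<beta> (?A \<union> ?B) ?A ?B"
    using bip_robust_expander_no_sparse_cut[OF g AV BV AB A0 mindW D5 D3(3) eAA bal params(1,2) nu(1)
        nu(2) params(3-6)] by blast
qed

lemma robust_partition_is_clustering: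
  fixes E :: "'a::linorder \<Rightarrow> 'a \<Rightarrow> bool"
  assumes g: "graph V E" and reg: "regular V E D" and Da: "\<alpha> * real (card V) \<le> real D"
    and alpha: "0 < \<alpha>" "\<alpha> < 1" and V0: "V \<noteq> {}"
    and rp: "robust_partition V E D \<rho> \<nu> \<tau> k l Vs As Bs"
    and params: "\<tau> \<le> \<alpha>\<^sup>2 / 100000" "0 \<le> \<zeta>" "\<zeta> \<le> \<nu> ^ 4 / 100" "\<gamma> \<le> \<nu> ^ 4 / 10000"
      "\<rho> \<le> \<nu> ^ 4 * \<eta> / 100000" "\<rho> \<le> \<beta>" "0 < \<eta>" "\<eta> \<le> 1"
  shows "clustering V E \<zeta> (\<alpha>\<^sup>2 / 3) \<gamma> \<beta> \<eta> (parts Vs As Bs k l) \<and>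
    (\<forall>j<l. almost_bip_wit V E \<beta> (As j \<union> Bs j) (As j) (Bs j)) \<and>
    (\<forall>i<k. far_from_bipartite V E \<gamma> (Vs i))"
proof -
  let ?P = "parts Vs As Bs k l" and ?n = "real (card V)"
  define c where "c = \<alpha>\<^sup>2 / 2"
  have nu: "0 < \<nu>" "\<nu> \<le> \<tau>" using robust_partitionD(1-3)[OF rp] by linarith+
  note N = clustering_parameter_bounds[OF nu params(1) alpha params(2-5,7,8), folded c_def]
  have n0: "0 < card V" using V0 graph_finite[OF g] by (simp add: card_gt_0_iff)
  have mind: "\<forall>X\<in>?P. \<forall>v\<in>X. c * ?n \<le> real (deg E X v)"
    using robust_partition_min_deg[OF g reg Da alpha(1) rp] unfolding c_def by blast
  have "0 < \<nu>\<^sup>2" using nu by simp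
  then have c_bounds: "\<zeta> < \<nu>\<^sup>2" "\<zeta> < c - \<tau>" "\<tau> \<le> c"
    using N(1,2) params(2) nu by linarith+
  note V_parts = robust_partition_expander_part[OF g rp V0 mind c_bounds(1,2) params(2) N(5,6,4) c_bounds(3)]
  note W_parts = robust_partition_bipartite_part[OF g rp V0 mind N(1) params(2) N(2,3,7,8) params(6)]
  have "real (k + l) * (\<rho> * ?n\<^sup>2) \<le> (2 / \<alpha>) * (\<rho> * ?n\<^sup>2)"
    using robust_partition_num_parts[OF rp Da alpha(1) n0] robust_partitionD(1)[OF rp]
    by (intro mult_right_mono) auto
  also have "\<dots> = (\<rho> * (2 / \<alpha>)) * ?n\<^sup>2" by simp
  also have "\<dots> \<le> \<eta> * ?n\<^sup>2" using N(9) by (rule mult_right_mono) simp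
  finally have crossing: "real (card {{x, y} |x y. E x y \<and> (\<exists>X\<in>?P. x \<in> X \<and> y \<notin> X)}) \<le> \<eta> * ?n\<^sup>2"
    using robust_partition_crossing_edges[OF g rp] by linarith
  have "\<alpha>\<^sup>2 / 3 * ?n \<le> c * ?n" unfolding c_def by (intro mult_right_mono) auto
  then have "\<forall>X\<in>?P. \<forall>v\<in>X. \<alpha>\<^sup>2 / 3 * ?n \<le> real (deg E X v)"
    using mind by (meson order_trans)
  moreover have "{} \<notin> ?P"
    using robust_partition_nonempty_parts[OF rp graph_finite[OF g] V0] by (auto simp: parts_def)
  moreover have "\<forall>A\<in>?P. \<not> (\<exists>X Y. sparse_cut E \<zeta> A X Y)"
    "\<forall>A\<in>?P. almost_bipartite V E \<beta> A \<or> far_from_bipartite V E \<gamma> A"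
    using V_parts W_parts unfolding almost_bipartite_def by (auto elim!: parts_cases) blast
  ultimately have "clustering V E \<zeta> (\<alpha>\<^sup>2 / 3) \<gamma> \<beta> \<eta> ?P"
    unfolding clustering_def Let_def
    using robust_partitionD(5)[OF rp] robust_partition_disjoint_parts[OF rp] crossing by blast
  then show ?thesis using V_parts W_parts by blast
qed

section \<open>Choice of the parameters\<close>

text \<open>With \<phi> = param_step f, the parameters are \<zeta> = \<nu>^3\<phi>(\<nu>), \<gamma> = \<phi>(\<zeta>), \<beta> = \<phi>(\<gamma>) and
  \<eta> = \<phi>(\<beta>) = eta_param f \<nu>. The function f' = shrink_param f is chosen so that \<rho> \<le> f'(\<nu>)
  gives \<rho> \<le> \<nu>^4 \<eta>/10^5 and \<tau> \<le> f'(\<alpha>) gives \<tau> \<le> \<alpha>^2/10^5.\<close>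

definition param_step :: "(real \<Rightarrow> real) \<Rightarrow> real \<Rightarrow> real" where
  "param_step f x = x * f x / 100"

definition zeta_param :: "(real \<Rightarrow> real) \<Rightarrow> real \<Rightarrow> real" where
  "zeta_param f \<nu> = \<nu> ^ 3 * param_step f \<nu>"

definition eta_param :: "(real \<Rightarrow> real) \<Rightarrow> real \<Rightarrow> real" where
  "eta_param f \<nu> = param_step f (param_step f (param_step f (zeta_param f \<nu>)))"

definition shrink_param :: "(real \<Rightarrow> real) \<Rightarrow> real \<Rightarrow> real" where
  "shrink_param f x = x ^ 4 * param_step f (eta_param f x) / 1000"

locale monotone_unit_map =
  fixes f :: "real \<Rightarrow> real"
  assumes maps_unit: "\<forall>x\<in>{0<..<1}. f x \<in> {0<..<1}"
    and mono_unit: "mono_on {0<..<1} f"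
begin

lemma param_step_bounds:
  assumes "0 < x" "x < 1"
  shows "0 < param_step f x" "param_step f x \<le> x / 100" "param_step f x < f x"
proof -
  have f: "0 < f x" "f x < 1" using maps_unit assms by auto
  show "0 < param_step f x" using f assms by (simp add: param_step_def)
  have "x * f x \<le> x * 1" using f assms by (intro mult_left_mono) auto
  then show "param_step f x \<le> x / 100" by (simp add: param_step_def)
  have "x * f x < 1 * f x" using f assms by (intro mult_strict_right_mono) auto
  then show "param_step f x < f x" using f by (simp add: param_step_def)
qed

lemma param_step_mono:
  assumes "0 < x" "x \<le> y" "y < 1"
  shows "param_step f x \<le> param_step f y"
proof -
  have "f x \<le> f y" using mono_unit assms by (auto intro: mono_onD)
  moreover have "0 < f x" using maps_unit assms by auto
  ultimately show ?thesis using assms unfolding param_step_def by (intro divide_right_mono mult_mono) auto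
qed

lemma zeta_param_bounds:
  assumes "0 < x" "x < 1"
  shows "0 < zeta_param f x" "zeta_param f x \<le> x ^ 4 / 100" "zeta_param f x \<le> param_step f x"
proof -
  note p = param_step_bounds[OF assms]
  have x3: "0 < x ^ 3" "x ^ 3 \<le> 1" using assms by (auto simp: power_le_one)
  show "0 < zeta_param f x" using p x3 by (simp add: zeta_param_def)
  have "x ^ 3 * param_step f x \<le> x ^ 3 * (x / 100)" using p x3 by (intro mult_left_mono) auto
  then show "zeta_param f x \<le> x ^ 4 / 100" by (simp add: zeta_param_def power_numeral_reduce)
  have "x ^ 3 * param_step f x \<le> 1 * param_step f x" using p x3 by (intro mult_right_mono) auto
  then show "zeta_param f x \<le> param_step f x" by (simp add: zeta_param_def)
qed

lemma param_step_unit: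
  assumes "0 < x" "x < 1"
  shows "0 < param_step f x" "param_step f x \<le> x" "param_step f x < 1"
  using param_step_bounds[OF assms] assms by linarith+

lemma zeta_param_unit:
  assumes "0 < x" "x < 1"
  shows "0 < zeta_param f x" "zeta_param f x \<le> x" "zeta_param f x < 1"
  using zeta_param_bounds[OF assms] param_step_unit[OF assms] assms by linarith+

lemma eta_param_bounds:
  assumes "0 < x" "x < 1"
  shows "0 < eta_param f x" "eta_param f x \<le> x"
proof -
  note z = zeta_param_unit[OF assms]
  note p1 = param_step_unit[OF z(1,3)]
  note p2 = param_step_unit[OF p1(1,3)]
  note p3 = param_step_unit[OF p2(1,3)]
  show "0 < eta_param f x" "eta_param f x \<le> x"
    using z p1 p2 p3 unfolding eta_param_def by linarith+
qed

lemma zeta_param_mono: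
  assumes "0 < x" "x \<le> y" "y < 1"
  shows "zeta_param f x \<le> zeta_param f y"
proof -
  have "x ^ 3 \<le> y ^ 3" using assms by (intro power_mono) auto
  moreover have "0 < param_step f x" using param_step_bounds assms by simp
  ultimately show ?thesis
    using param_step_mono[OF assms] assms unfolding zeta_param_def by (intro mult_mono) auto
qed

lemma eta_param_mono:
  assumes "0 < x" "x \<le> y" "y < 1"
  shows "eta_param f x \<le> eta_param f y"
proof -
  have y: "0 < y" using assms by linarith
  note zx = zeta_param_unit[OF assms(1) order.strict_trans1[OF assms(2,3)]]
  note zy = zeta_param_unit[OF y assms(3)]
  note px = param_step_unit[OF zx(1,3)] and py = param_step_unit[OF zy(1,3)]
  note qx = param_step_unit[OF px(1,3)] and qy = param_step_unit[OF py(1,3)]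
  have "param_step f (zeta_param f x) \<le> param_step f (zeta_param f y)"
    by (rule param_step_mono[OF zx(1) zeta_param_mono[OF assms] zy(3)])
  then have "param_step f (param_step f (zeta_param f x)) \<le> param_step f (param_step f (zeta_param f y))"
    by (rule param_step_mono[OF px(1) _ py(3)])
  then show ?thesis unfolding eta_param_def by (rule param_step_mono[OF qx(1) _ qy(3)])
qed

lemma shrink_param_bounds:
  assumes "0 < x" "x < 1"
  shows "0 < shrink_param f x" "shrink_param f x < f x" "shrink_param f x < 1"
proof -
  note h = eta_param_bounds[OF assms]
  then have h1: "eta_param f x < 1" using assms by linarith
  note p = param_step_bounds[OF h(1) h1]
  have x4: "0 < x ^ 4" "x ^ 4 \<le> 1" using assms by (auto simp: power_le_one)
  show "0 < shrink_param f x" using x4 p by (simp add: shrink_param_def)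
  have "x ^ 4 * param_step f (eta_param f x) \<le> 1 * param_step f (eta_param f x)"
    using x4 p by (intro mult_right_mono) auto
  then have "shrink_param f x < param_step f (eta_param f x)" using p by (simp add: shrink_param_def)
  moreover have "f (eta_param f x) \<le> f x" using mono_unit h h1 assms by (auto intro: mono_onD)
  ultimately show "shrink_param f x < f x" using p by linarith
  moreover have "f x < 1" using maps_unit assms by simp
  ultimately show "shrink_param f x < 1" by linarith
qed

lemma shrink_param_mono: "mono_on {0<..<1} (shrink_param f)"
proof (rule mono_onI)
  fix x y :: real assume "x \<in> {0<..<1}" "y \<in> {0<..<1}" "x \<le> y"
  then have xy: "0 < x" "x \<le> y" "y < 1" by auto
  have hx: "0 < eta_param f x" using eta_param_bounds xy by simp
  have hy: "eta_param f y < 1" using eta_param_bounds[of y] xy by linarith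
  have "param_step f (eta_param f x) \<le> param_step f (eta_param f y)"
    by (rule param_step_mono[OF hx eta_param_mono[OF xy] hy])
  moreover have "x ^ 4 \<le> y ^ 4" using xy by (intro power_mono) auto
  moreover have "0 < param_step f (eta_param f x)" using param_step_bounds hx hy eta_param_mono[OF xy]
    by (meson order.strict_trans1)
  ultimately show "shrink_param f x \<le> shrink_param f y" unfolding shrink_param_def using xy
    by (intro divide_right_mono mult_mono) auto
qed


lemma clustering_parameters:
  assumes nu: "0 < \<nu>" "\<nu> < 1" and alpha: "0 < \<alpha>" "\<alpha> < 1"
    and rho: "\<rho> \<le> shrink_param f \<nu>" and tau: "\<tau> \<le> shrink_param f \<alpha>"
  obtains \<zeta> \<gamma> \<beta> \<eta> where "\<zeta> \<in> {0<..<1}" "\<gamma> \<in> {0<..<1}" "\<beta> \<in> {0<..<1}" "\<eta> \<in> {0<..<1}"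
    "\<rho> \<le> f \<eta>" "\<eta> \<le> f \<beta>" "\<beta> \<le> f \<gamma>" "\<gamma> \<le> f \<zeta>" "\<zeta> \<le> f \<nu>"
    "\<zeta> \<le> \<nu> ^ 4 / 100" "\<gamma> \<le> \<nu> ^ 4 / 10000" "\<rho> \<le> \<nu> ^ 4 * \<eta> / 100000" "\<rho> \<le> \<beta>"
    "\<tau> \<le> \<alpha>\<^sup>2 / 100000"
proof
  let ?\<zeta> = "zeta_param f \<nu>"
  let ?\<gamma> = "param_step f ?\<zeta>" let ?\<beta> = "param_step f ?\<gamma>" let ?\<eta> = "param_step f ?\<beta>"
  note z = zeta_param_bounds[OF nu] zeta_param_unit[OF nu]
  note g = param_step_bounds[OF z(4,6)] param_step_unit[OF z(4,6)]
  note b = param_step_bounds[OF g(4,6)] param_step_unit[OF g(4,6)]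
  note e = param_step_bounds[OF b(4,6)] param_step_unit[OF b(4,6)]
  note pe = param_step_bounds[OF e(4,6)]
  show "?\<zeta> \<in> {0<..<1}" "?\<gamma> \<in> {0<..<1}" "?\<beta> \<in> {0<..<1}" "?\<eta> \<in> {0<..<1}"
    using z g b e by auto
  show "?\<eta> \<le> f ?\<beta>" "?\<beta> \<le> f ?\<gamma>" "?\<gamma> \<le> f ?\<zeta>" "?\<zeta> \<le> f \<nu>"
    using z e b g param_step_bounds[OF nu] by linarith+
  show "?\<zeta> \<le> \<nu> ^ 4 / 100" "?\<gamma> \<le> \<nu> ^ 4 / 10000" using z g by linarith+
  have x4: "0 < \<nu> ^ 4" "\<nu> ^ 4 \<le> 1" using nu by (auto simp: power_le_one)
  have rho': "\<rho> \<le> \<nu> ^ 4 * (param_step f ?\<eta> / 1000)"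
    using rho unfolding shrink_param_def eta_param_def by simp
  have "\<nu> ^ 4 * (param_step f ?\<eta> / 1000) \<le> 1 * (param_step f ?\<eta> / 1000)"
    using x4 pe by (intro mult_right_mono) auto
  then show "\<rho> \<le> f ?\<eta>" using rho' pe by linarith
  have "\<nu> ^ 4 * (param_step f ?\<eta> / 1000) \<le> \<nu> ^ 4 * (?\<eta> / 100000)"
    using pe x4 by (intro mult_left_mono) auto
  then have "\<rho> \<le> \<nu> ^ 4 * (?\<eta> / 100000)" using rho' by linarith
  then show "\<rho> \<le> \<nu> ^ 4 * ?\<eta> / 100000" by simp
  then have "\<rho> \<le> ?\<eta>" using x4 e mult_right_mono[OF x4(2), of ?\<eta>] by linarith
  then show "\<rho> \<le> ?\<beta>" using e by linarith
  note h = eta_param_bounds[OF alpha]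
  have "param_step f (eta_param f \<alpha>) \<le> 1 / 100"
    using param_step_bounds[OF h(1)] h alpha by linarith
  then have "\<alpha> ^ 4 * param_step f (eta_param f \<alpha>) \<le> \<alpha> ^ 4 * (1 / 100)"
    using alpha by (intro mult_left_mono) auto
  then have "\<tau> \<le> \<alpha> ^ 4 / 100000" using tau unfolding shrink_param_def by linarith
  moreover have "\<alpha> ^ 4 \<le> \<alpha>\<^sup>2" using alpha by (intro power_decreasing) auto
  ultimately show "\<tau> \<le> \<alpha>\<^sup>2 / 100000" by linarith
qed

end

lemma alpha_sq_third_bounds:
  fixes \<alpha> \<tau> :: real
  assumes "0 < \<alpha>" "\<alpha> < 1" "\<tau> \<le> \<alpha>\<^sup>2 / 100000"
  shows "\<alpha>\<^sup>2 / 3 \<in> {0<..<1}" "\<tau> < \<alpha>\<^sup>2 / 3" "\<alpha>\<^sup>2 / 3 < \<alpha>"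
proof -
  have "0 < \<alpha>\<^sup>2" "\<alpha>\<^sup>2 \<le> \<alpha>" using assms by (simp_all add: power2_eq_square mult_left_le_one_le)
  then have "0 < \<alpha>\<^sup>2 / 3" "\<alpha>\<^sup>2 / 3 < 1" "\<tau> < \<alpha>\<^sup>2 / 3" "\<alpha>\<^sup>2 / 3 < \<alpha>" using assms by linarith+
  then show "\<alpha>\<^sup>2 / 3 \<in> {0<..<1}" "\<tau> < \<alpha>\<^sup>2 / 3" "\<alpha>\<^sup>2 / 3 < \<alpha>" by auto
qed

lemma robust_partitions_are_clusterings:
  assumes nu: "0 < \<nu>" "\<nu> \<le> \<tau>" and alpha: "0 < \<alpha>" "\<alpha> < 1" and n: "0 < n"
    and unit: "\<zeta> \<in> {0<..<1}" "\<eta> \<in> {0<..<1}"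
    and params: "\<zeta> \<le> \<nu> ^ 4 / 100" "\<gamma> \<le> \<nu> ^ 4 / 10000" "\<rho> \<le> \<nu> ^ 4 * \<eta> / 100000" "\<rho> \<le> \<beta>"
      "\<tau> \<le> \<alpha>\<^sup>2 / 100000"
  shows "\<forall>(V :: 'a::linorder set) E D Vs As Bs.
    graph V E \<and> card V = n \<and> regular V E D \<and> real D \<ge> \<alpha> * real n \<and>
    robust_partition V E D \<rho> \<nu> \<tau> k l Vs As Bs \<longrightarrow>
      clustering V E \<zeta> (\<alpha>\<^sup>2 / 3) \<gamma> \<beta> \<eta> (parts Vs As Bs k l) \<and>
      (\<forall>j<l. almost_bip_wit V E \<beta> (As j \<union> Bs j) (As j) (Bs j)) \<and>
      (\<forall>i<k. far_from_bipartite V E \<gamma> (Vs i))"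
proof (intro allI impI, elim conjE)
  fix V :: "'a set" and E D Vs As Bs
  assume "graph V E" "card V = n" "regular V E D" "real D \<ge> \<alpha> * real n"
    "robust_partition V E D \<rho> \<nu> \<tau> k l Vs As Bs"
  moreover have "V \<noteq> {}" using \<open>card V = n\<close> n by auto
  moreover have "0 \<le> \<zeta>" "0 < \<eta>" "\<eta> \<le> 1" using unit by auto
  ultimately show "clustering V E \<zeta> (\<alpha>\<^sup>2 / 3) \<gamma> \<beta> \<eta> (parts Vs As Bs k l) \<and>
      (\<forall>j<l. almost_bip_wit V E \<beta> (As j \<union> Bs j) (As j) (Bs j)) \<and>
      (\<forall>i<k. far_from_bipartite V E \<gamma> (Vs i))"
    using robust_partition_is_clustering[OF _ _ _ alpha _ _ params(5) _ params(1-4)] by blast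
qed

theorem mainTheorem17:
  fixes f :: "real \<Rightarrow> real"
  assumes "\<forall>x\<in>{0<..<1}. f x \<in> {0<..<1}"
    and "mono_on {0<..<1} f"
  shows "\<exists>f' :: real \<Rightarrow> real.
    (\<forall>x\<in>{0<..<1}. f' x \<in> {0<..<1}) \<and> mono_on {0<..<1} f' \<and>
    (\<forall>x\<in>{0<..<1}. f' x < f x) \<and>
    (\<forall>\<rho> \<nu> \<tau> \<alpha> (n::nat) (k::nat) (l::nat).
       \<rho> \<in> {0<..<1} \<and> \<nu> \<in> {0<..<1} \<and> \<tau> \<in> {0<..<1} \<and> \<alpha> \<in> {0<..<1} \<and>
       0 < n \<and> 1 / real n \<le> \<rho> \<and> \<rho> \<le> f' \<nu> \<and> \<nu> \<le> \<tau> \<and> \<tau> \<le> f' \<alpha> \<longrightarrow>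
       (\<exists>\<zeta> \<delta> \<gamma> \<beta> \<eta>.
          \<zeta> \<in> {0<..<1} \<and> \<delta> \<in> {0<..<1} \<and> \<gamma> \<in> {0<..<1} \<and> \<beta> \<in> {0<..<1} \<and> \<eta> \<in> {0<..<1} \<and>
          \<rho> \<le> f \<eta> \<and> \<eta> \<le> f \<beta> \<and> \<beta> \<le> f \<gamma> \<and> \<gamma> \<le> f \<zeta> \<and> \<zeta> \<le> f \<nu> \<and>
          \<tau> < \<delta> \<and> \<delta> < \<alpha> \<and>
          (\<forall>(V :: nat set) E (D::nat) Vs As Bs.
             graph V E \<and> card V = n \<and> regular V E D \<and> real D \<ge> \<alpha> * real n \<and>
             robust_partition V E D \<rho> \<nu> \<tau> k l Vs As Bs \<longrightarrow>
               clustering V E \<zeta> \<delta> \<gamma> \<beta> \<eta> (parts Vs As Bs k l) \<and>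
               (\<forall>j<l. almost_bip_wit V E \<beta> (As j \<union> Bs j) (As j) (Bs j)) \<and>
               (\<forall>i<k. far_from_bipartite V E \<gamma> (Vs i)))))"
proof -
  interpret monotone_unit_map f using assms by unfold_locales
  show ?thesis
  proof (intro exI[of _ "shrink_param f"] conjI allI impI, goal_cases)
    case 1
    show ?case using shrink_param_bounds by auto
  next
    case 2
    show ?case by (rule shrink_param_mono)
  next
    case 3
    show ?case using shrink_param_bounds by auto
  next
    case (4 \<rho> \<nu> \<tau> \<alpha> n k l)
    then have nu: "0 < \<nu>" "\<nu> < 1" "\<nu> \<le> \<tau>" and alpha: "0 < \<alpha>" "\<alpha> < 1" and n: "0 < n"
      and shrink: "\<rho> \<le> shrink_param f \<nu>" "\<tau> \<le> shrink_param f \<alpha>" by auto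
    obtain \<zeta> \<gamma> \<beta> \<eta> where unit: "\<zeta> \<in> {0<..<1}" "\<gamma> \<in> {0<..<1}" "\<beta> \<in> {0<..<1}" "\<eta> \<in> {0<..<1}"
      and chain: "\<rho> \<le> f \<eta>" "\<eta> \<le> f \<beta>" "\<beta> \<le> f \<gamma>" "\<gamma> \<le> f \<zeta>" "\<zeta> \<le> f \<nu>"
      and small: "\<zeta> \<le> \<nu> ^ 4 / 100" "\<gamma> \<le> \<nu> ^ 4 / 10000" "\<rho> \<le> \<nu> ^ 4 * \<eta> / 100000" "\<rho> \<le> \<beta>"
        "\<tau> \<le> \<alpha>\<^sup>2 / 100000"
      using clustering_parameters[OF nu(1,2) alpha shrink] by blast
    show ?case
      using unit chain alpha_sq_third_bounds[OF alpha small(5)]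
        robust_partitions_are_clusterings[OF nu(1,3) alpha n unit(1,4) small] by blast
  qed
qed

end
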